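(* Let $d\ge1$, let $G=(V,E)$ be a graph on at least $d$ vertices, and let $G'$ be obtained from the cone $G*v$ by deleting $t$ edges incident to $v$. Suppose $G'$ is minimally $\mathcal{R}_{d+1}$-rigid. Then $G$ is $\mathcal{R}_d$-rigid and $|E|=d|V|-\binom{d+1}{2}+t$. Moreover, if $S$ is the set of vertices of $G'$ (other than $v$) that are not adjacent to $v$, then $G-S$ is $\mathcal{R}_d$-independent and each $s\in S$ belongs to an $\mathcal{R}_d$-circuit in $G$.
   Context: For a graph $G=(V,E)$ and a generic $p:V\to\mathbb{R}^d$ (coordinates algebraically independent over $\mathbb{Q}$), the rigidity matrix has a row for each $uv\in E$ with $p(u)-p(v)$ in the $d$ columns of $u$, $p(v)-p(u)$ in those of $v$, zeros elsewhere; $\mathcal{R}_d$ is its row matroid, with rank $r_d$. A graph $H=(W,F)$ is $\mathcal{R}_d$-independent if $r_d(F)=|F|$; $\mathcal{R}_d$-rigid if it is complete on at most $d+1$ vertices or $r_d(F)=d|W|-\binom{d+1}{2}$; minimally $\mathcal{R}_d$-rigid if both. An $\mathcal{R}_d$-circuit is a minimal dependent edge set. The cone $G*v$ is obtained by adding a new vertex $v$ adjacent to every vertex of $G$. *)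

theory Defs
  imports Complex_Main
begin

definition simple_graph :: "'a set \<Rightarrow> 'a set set \<Rightarrow> bool" where
  "simple_graph V E \<longleftrightarrow> finite V \<and> (\<forall>e\<in>E. e \<subseteq> V \<and> card e = 2)"

definition complete_edges :: "'a set \<Rightarrow> 'a set set" where
  "complete_edges W = {{u, w} | u w. u \<in> W \<and> w \<in> W \<and> u \<noteq> w}"

text \<open>A polynomial is given by its finitely supported coefficient
  function c on monomials (exponent vectors m :: 'i => nat supported in I).\<close>
definition alg_indep_Q :: "'i set \<Rightarrow> ('i \<Rightarrow> real) \<Rightarrow> bool" where
  "alg_indep_Q I x \<longleftrightarrow>
     (\<forall>c :: ('i \<Rightarrow> nat) \<Rightarrow> real.
        finite {m. c m \<noteq> 0} \<and> (\<forall>m. c m \<in> \<rat>) \<and>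
        (\<forall>m. c m \<noteq> 0 \<longrightarrow> (\<forall>i. i \<notin> I \<longrightarrow> m i = 0)) \<and>
        (\<Sum>m\<in>{m. c m \<noteq> 0}. c m * (\<Prod>i\<in>I. x i ^ m i)) = 0
        \<longrightarrow> (\<forall>m. c m = 0))"

text \<open>A realisation p : V -> R^d, coordinates p u k for k < d.\<close>
definition generic :: "nat \<Rightarrow> 'a set \<Rightarrow> ('a \<Rightarrow> nat \<Rightarrow> real) \<Rightarrow> bool" where
  "generic d V p \<longleftrightarrow> alg_indep_Q (V \<times> {..<d}) (\<lambda>(u, k). p u k)"

text \<open>Entry of the row of edge e in column (w,k): for e = {u,w} it is p(w)_k - p(u)_k,
  and 0 if w is not an endpoint of e.\<close>
definition rig_entry :: "('a \<Rightarrow> nat \<Rightarrow> real) \<Rightarrow> 'a set \<Rightarrow> 'a \<Rightarrow> nat \<Rightarrow> real" where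
  "rig_entry p e w k = (if w \<in> e then (\<Sum>z\<in>e - {w}. p w k - p z k) else 0)"

definition rows_indep :: "nat \<Rightarrow> ('a \<Rightarrow> nat \<Rightarrow> real) \<Rightarrow> 'a set set \<Rightarrow> bool" where
  "rows_indep d p F \<longleftrightarrow>
     (\<forall>c :: 'a set \<Rightarrow> real.
        (\<forall>w k. k < d \<longrightarrow> (\<Sum>e\<in>F. c e * rig_entry p e w k) = 0) \<longrightarrow> (\<forall>e\<in>F. c e = 0))"

definition rig_rank :: "nat \<Rightarrow> ('a \<Rightarrow> nat \<Rightarrow> real) \<Rightarrow> 'a set set \<Rightarrow> nat" where
  "rig_rank d p F = Max {card F' | F'. F' \<subseteq> F \<and> rows_indep d p F'}"

definition gen_rank :: "nat \<Rightarrow> 'a set \<Rightarrow> 'a set set \<Rightarrow> nat" where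
  "gen_rank d V F = rig_rank d (SOME p. generic d V p) F"

definition R_indep :: "nat \<Rightarrow> 'a set \<Rightarrow> 'a set set \<Rightarrow> bool" where
  "R_indep d W F \<longleftrightarrow> gen_rank d W F = card F"

definition R_rigid :: "nat \<Rightarrow> 'a set \<Rightarrow> 'a set set \<Rightarrow> bool" where
  "R_rigid d W F \<longleftrightarrow>
     (F = complete_edges W \<and> card W \<le> d + 1) \<or>
     int (gen_rank d W F) = int d * int (card W) - int ((d + 1) choose 2)"

definition R_min_rigid :: "nat \<Rightarrow> 'a set \<Rightarrow> 'a set set \<Rightarrow> bool" where
  "R_min_rigid d W F \<longleftrightarrow> R_rigid d W F \<and> R_indep d W F"

definition R_circuit :: "nat \<Rightarrow> 'a set \<Rightarrow> 'a set set \<Rightarrow> bool" where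
  "R_circuit d V C \<longleftrightarrow> \<not> R_indep d V C \<and> (\<forall>C'. C' \<subset> C \<longrightarrow> R_indep d V C')"

end

theory Submission
  imports Defs "Jordan_Normal_Form.Determinant" "HOL-Library.Function_Algebras"
    "HOL-Analysis.Continuum_Not_Denumerable" "HOL-Computational_Algebra.Polynomial"
begin

text \<open>
  Generic ranks are maximal ranks: a set of rows of the rigidity matrix is independent iff its
  Gram determinant is nonzero, and that determinant is a polynomial with rational coefficients in
  the coordinates, which cannot vanish at an algebraically independent point unless it vanishes
  identically.  (Algebraically independent points exist since each of the countably many nonzero
  rational polynomials has finitely many roots in a new variable.)  Projecting a generic
  realisation of a cone centrally from the apex v onto the hyperplane where the last coordinate
  is 1 gives r(d+1, H + cone v W) \<le> r(d, H) + |W|, and by induction on d this bounds the rank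
  of every graph on W by d|W| - C(d+1,2).

  For G' = G*v - T, the first and the last term of the chain
  r(d+1, G') \<le> r(d+1, G*v) \<le> r(d, G) + |V| \<le> d|V| - C(d+1,2) + |V|
  are both equal to |E(G')| = (d+1)(|V|+1) - C(d+2,2), which gives the rigidity of G and the
  edge count.  The cone over G - S is a subgraph of G', so G - S is independent.  For s in S
  the edge vs depends on G'; the column of s in that dependence involves an edge f of G at s,
  and exchanging f for vs shows r(d, G - f) = r(d, G), so f lies in a circuit of G.
\<close>

section \<open>Polynomial functions with rational coefficients\<close>

definition monomial_value :: "'i set \<Rightarrow> ('i \<Rightarrow> nat) \<Rightarrow> ('i \<Rightarrow> real) \<Rightarrow> real" where
  "monomial_value I m x = (\<Prod>i\<in>I. x i ^ m i)"

definition rat_poly_fun :: "'i set \<Rightarrow> (('i \<Rightarrow> real) \<Rightarrow> real) \<Rightarrow> bool" where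
  "rat_poly_fun I f \<longleftrightarrow> (\<exists>S c. finite S \<and> (\<forall>m\<in>S. c m \<in> \<rat> \<and> (\<forall>i. i \<notin> I \<longrightarrow> m i = 0))
      \<and> (\<forall>x. f x = (\<Sum>m\<in>S. c m * monomial_value I m x)))"

lemma rat_poly_fun_const: "r \<in> \<rat> \<Longrightarrow> rat_poly_fun I (\<lambda>x. r)"
  unfolding rat_poly_fun_def
  by (rule exI[of _ "{\<lambda>_. 0}"], rule exI[of _ "\<lambda>_. r"]) (auto simp: monomial_value_def)

lemma rat_poly_fun_var:
  assumes "i \<in> I" "finite I"
  shows "rat_poly_fun I (\<lambda>x. x i)"
  unfolding rat_poly_fun_def
proof (intro exI[of _ "{\<lambda>j. if j = i then 1 else 0}"] exI[of _ "\<lambda>_. 1"] conjI allI ballI)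
  fix x :: "'a \<Rightarrow> real"
  have "monomial_value I (\<lambda>j. if j = i then 1 else 0) x = x i"
    unfolding monomial_value_def using assms by (subst prod.remove[of _ i]) auto
  then show "x i = (\<Sum>m\<in>{\<lambda>j. if j = i then 1 else 0}. 1 * monomial_value I m x)" by simp
qed (use assms in auto)

lemma rat_poly_fun_add:
  assumes "rat_poly_fun I f" "rat_poly_fun I g"
  shows "rat_poly_fun I (\<lambda>x. f x + g x)"
proof -
  obtain S1 c1 where 1: "finite S1" "\<forall>m\<in>S1. c1 m \<in> \<rat> \<and> (\<forall>i. i \<notin> I \<longrightarrow> m i = 0)"
    "\<forall>x. f x = (\<Sum>m\<in>S1. c1 m * monomial_value I m x)" using assms(1) unfolding rat_poly_fun_def by blast
  obtain S2 c2 where 2: "finite S2" "\<forall>m\<in>S2. c2 m \<in> \<rat> \<and> (\<forall>i. i \<notin> I \<longrightarrow> m i = 0)"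
    "\<forall>x. g x = (\<Sum>m\<in>S2. c2 m * monomial_value I m x)" using assms(2) unfolding rat_poly_fun_def by blast
  define c where "c m = (if m \<in> S1 then c1 m else 0) + (if m \<in> S2 then c2 m else 0)" for m
  have "f x + g x = (\<Sum>m\<in>S1 \<union> S2. c m * monomial_value I m x)" for x
  proof -
    have "(\<Sum>m\<in>S1 \<union> S2. (if m \<in> S1 then c1 m else 0) * monomial_value I m x)
        = (\<Sum>m\<in>S1. c1 m * monomial_value I m x)"
      by (rule sum.mono_neutral_cong_right) (use 1 2 in auto)
    moreover have "(\<Sum>m\<in>S1 \<union> S2. (if m \<in> S2 then c2 m else 0) * monomial_value I m x)
        = (\<Sum>m\<in>S2. c2 m * monomial_value I m x)"
      by (rule sum.mono_neutral_cong_right) (use 1 2 in auto)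
    ultimately show ?thesis
      unfolding c_def distrib_right sum.distrib using 1 2 by simp
  qed
  moreover have "\<forall>m\<in>S1 \<union> S2. c m \<in> \<rat> \<and> (\<forall>i. i \<notin> I \<longrightarrow> m i = 0)"
    using 1 2 unfolding c_def by auto
  ultimately show ?thesis
    unfolding rat_poly_fun_def using 1 2 by (intro exI[of _ "S1 \<union> S2"] exI[of _ c]) simp
qed

lemma monomial_value_add:
  "finite I \<Longrightarrow> monomial_value I (\<lambda>i. a i + b i) x = monomial_value I a x * monomial_value I b x"
  unfolding monomial_value_def by (simp add: power_add prod.distrib)

lemma rat_poly_fun_mult:
  assumes "rat_poly_fun I f" "rat_poly_fun I g" "finite I"
  shows "rat_poly_fun I (\<lambda>x. f x * g x)"
proof -
  obtain S1 c1 where 1: "finite S1" "\<forall>m\<in>S1. c1 m \<in> \<rat> \<and> (\<forall>i. i \<notin> I \<longrightarrow> m i = 0)"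
    "\<forall>x. f x = (\<Sum>m\<in>S1. c1 m * monomial_value I m x)" using assms(1) unfolding rat_poly_fun_def by blast
  obtain S2 c2 where 2: "finite S2" "\<forall>m\<in>S2. c2 m \<in> \<rat> \<and> (\<forall>i. i \<notin> I \<longrightarrow> m i = 0)"
    "\<forall>x. g x = (\<Sum>m\<in>S2. c2 m * monomial_value I m x)" using assms(2) unfolding rat_poly_fun_def by blast
  define pl where "pl = (\<lambda>(a::'a\<Rightarrow>nat, b::'a\<Rightarrow>nat). (\<lambda>i. a i + b i))"
  define S where "S = pl ` (S1 \<times> S2)"
  define c where "c m = (\<Sum>ab\<in>{ab \<in> S1 \<times> S2. pl ab = m}. c1 (fst ab) * c2 (snd ab))" for m
  have "\<forall>m\<in>S. c m \<in> \<rat> \<and> (\<forall>i. i \<notin> I \<longrightarrow> m i = 0)"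
    unfolding c_def S_def pl_def using 1 2 by auto
  moreover have "f x * g x = (\<Sum>m\<in>S. c m * monomial_value I m x)" for x
  proof -
    have "(\<Sum>m\<in>S. c m * monomial_value I m x)
        = (\<Sum>m\<in>S. \<Sum>ab\<in>{ab \<in> S1 \<times> S2. pl ab = m}. c1 (fst ab) * c2 (snd ab) * monomial_value I (pl ab) x)"
      unfolding c_def sum_distrib_right by (intro sum.cong refl) auto
    also have "\<dots> = (\<Sum>ab\<in>S1 \<times> S2. c1 (fst ab) * c2 (snd ab) * monomial_value I (pl ab) x)"
      by (rule sum.group) (use 1 2 in \<open>auto simp: S_def\<close>)
    also have "\<dots> = (\<Sum>ab\<in>S1 \<times> S2. (c1 (fst ab) * monomial_value I (fst ab) x) * (c2 (snd ab) * monomial_value I (snd ab) x))"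
      by (intro sum.cong refl) (auto simp: pl_def monomial_value_add[OF assms(3)])
    also have "\<dots> = f x * g x"
      unfolding 1(3)[rule_format] 2(3)[rule_format] sum_product sum.cartesian_product
      by (simp add: case_prod_beta)
    finally show ?thesis ..
  qed
  ultimately show ?thesis
    unfolding rat_poly_fun_def using 1 2 by (intro exI[of _ S] exI[of _ c]) (simp add: S_def)
qed

lemma rat_poly_fun_diff:
  "rat_poly_fun I f \<Longrightarrow> rat_poly_fun I g \<Longrightarrow> finite I \<Longrightarrow> rat_poly_fun I (\<lambda>x. f x - g x)"
  using rat_poly_fun_add[OF _ rat_poly_fun_mult[OF rat_poly_fun_const[of "-1"]], of I f g] by simp

lemma rat_poly_fun_sum:
  "finite A \<Longrightarrow> finite I \<Longrightarrow> (\<And>a. a \<in> A \<Longrightarrow> rat_poly_fun I (f a))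
    \<Longrightarrow> rat_poly_fun I (\<lambda>x. \<Sum>a\<in>A. f a x)"
  by (induction A rule: finite_induct) (auto intro: rat_poly_fun_add rat_poly_fun_const)

lemma rat_poly_fun_prod:
  "finite A \<Longrightarrow> finite I \<Longrightarrow> (\<And>a. a \<in> A \<Longrightarrow> rat_poly_fun I (f a))
    \<Longrightarrow> rat_poly_fun I (\<lambda>x. \<Prod>a\<in>A. f a x)"
  by (induction A rule: finite_induct) (auto intro: rat_poly_fun_mult rat_poly_fun_const)

definition rat_poly_coeffs :: "'i set \<Rightarrow> (('i \<Rightarrow> nat) \<Rightarrow> real) \<Rightarrow> bool" where
  "rat_poly_coeffs I c \<longleftrightarrow> finite {m. c m \<noteq> 0} \<and> (\<forall>m. c m \<in> \<rat>)
     \<and> (\<forall>m. c m \<noteq> 0 \<longrightarrow> (\<forall>i. i \<notin> I \<longrightarrow> m i = 0))"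

definition poly_value :: "'i set \<Rightarrow> (('i \<Rightarrow> nat) \<Rightarrow> real) \<Rightarrow> ('i \<Rightarrow> real) \<Rightarrow> real" where
  "poly_value I c x = (\<Sum>m | c m \<noteq> 0. c m * monomial_value I m x)"

lemma alg_indep_Q_iff:
  "alg_indep_Q I x \<longleftrightarrow> (\<forall>c. rat_poly_coeffs I c \<and> poly_value I c x = 0 \<longrightarrow> (\<forall>m. c m = 0))"
  unfolding alg_indep_Q_def rat_poly_coeffs_def poly_value_def monomial_value_def by blast

lemma rat_poly_fun_vanishes_if_alg_indep:
  assumes "alg_indep_Q I x" "rat_poly_fun I f" "f x = 0"
  shows "f y = 0"
proof -
  obtain S c where S: "finite S" "\<forall>m\<in>S. c m \<in> \<rat> \<and> (\<forall>i. i \<notin> I \<longrightarrow> m i = 0)"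
    "\<forall>x. f x = (\<Sum>m\<in>S. c m * monomial_value I m x)" using assms(2) unfolding rat_poly_fun_def by blast
  define c' where "c' m = (if m \<in> S then c m else 0)" for m
  have supp: "{m. c' m \<noteq> 0} \<subseteq> S" unfolding c'_def by auto
  have val: "poly_value I c' z = f z" for z
    unfolding poly_value_def S(3)[rule_format]
    by (rule sum.mono_neutral_cong_left) (use S supp in \<open>auto simp: c'_def\<close>)
  have "rat_poly_coeffs I c'"
    unfolding rat_poly_coeffs_def using finite_subset[OF supp S(1)] S(2) by (auto simp: c'_def)
  moreover have "poly_value I c' x = 0" using val assms(3) by simp
  ultimately have "\<forall>m. c' m = 0" using assms(1) unfolding alg_indep_Q_iff by blast
  then have "poly_value I c' y = 0" unfolding poly_value_def by simp
  then show ?thesis using val by simp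
qed

lemma alg_indep_Q_empty: "alg_indep_Q {} x"
  unfolding alg_indep_Q_iff
proof (rule allI, rule impI)
  fix c :: "('a \<Rightarrow> nat) \<Rightarrow> real"
  assume c: "rat_poly_coeffs {} c \<and> poly_value {} c x = 0"
  then have supp: "{m. c m \<noteq> 0} \<subseteq> {\<lambda>_. 0}" unfolding rat_poly_coeffs_def by auto
  have "c (\<lambda>_. 0) = 0"
  proof (rule ccontr)
    assume "c (\<lambda>_. 0) \<noteq> 0"
    then have "{m. c m \<noteq> 0} = {\<lambda>_. 0}" using supp by auto
    then show False using c \<open>c (\<lambda>_. 0) \<noteq> 0\<close> by (simp add: poly_value_def monomial_value_def)
  qed
  then show "\<forall>m. c m = 0" using supp by auto
qed

(* coeff_slice i0 j c is the coefficient of X_i0^j in c, as a polynomial in the other variables. *)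
definition coeff_slice :: "'i \<Rightarrow> nat \<Rightarrow> (('i \<Rightarrow> nat) \<Rightarrow> real) \<Rightarrow> ('i \<Rightarrow> nat) \<Rightarrow> real" where
  "coeff_slice i0 j c m = (if m i0 = 0 then c (m(i0 := j)) else 0)"

lemma coeff_slice_nonzero:
  assumes "coeff_slice i0 j c m \<noteq> 0"
  shows "m i0 = 0" "c (m(i0 := j)) \<noteq> 0" "m = (m(i0 := j))(i0 := 0)"
proof -
  show m0: "m i0 = 0" using assms unfolding coeff_slice_def by (auto split: if_splits)
  then show "c (m(i0 := j)) \<noteq> 0" using assms unfolding coeff_slice_def by simp
  show "m = (m(i0 := j))(i0 := 0)" using m0 by (simp add: fun_eq_iff)
qed

lemma rat_poly_coeffs_slice:
  assumes "rat_poly_coeffs (insert i0 I) c"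
  shows "rat_poly_coeffs I (coeff_slice i0 j c)"
proof -
  have "{m. coeff_slice i0 j c m \<noteq> 0} \<subseteq> (\<lambda>m. m(i0 := 0)) ` {m. c m \<noteq> 0}"
  proof
    fix m assume "m \<in> {m. coeff_slice i0 j c m \<noteq> 0}"
    then have nz: "coeff_slice i0 j c m \<noteq> 0" by simp
    show "m \<in> (\<lambda>m. m(i0 := 0)) ` {m. c m \<noteq> 0}"
      by (rule image_eqI[where f = "\<lambda>m. m(i0 := 0)", OF coeff_slice_nonzero(3)[OF nz]])
        (use coeff_slice_nonzero(2)[OF nz] in simp)
  qed
  then have "finite {m. coeff_slice i0 j c m \<noteq> 0}"
    using assms unfolding rat_poly_coeffs_def by (auto intro: finite_subset)
  moreover have "m i = 0" if "coeff_slice i0 j c m \<noteq> 0" "i \<notin> I" for m i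
  proof (cases "i = i0")
    case False
    then have "(m(i0 := j)) i = 0"
      using assms coeff_slice_nonzero(2)[OF that(1)] \<open>i \<notin> I\<close> unfolding rat_poly_coeffs_def by blast
    then show ?thesis using False by simp
  qed (use coeff_slice_nonzero(1)[OF that(1)] in simp)
  moreover have "coeff_slice i0 j c m \<in> \<rat>" for m
    using assms unfolding rat_poly_coeffs_def coeff_slice_def by simp
  ultimately show ?thesis unfolding rat_poly_coeffs_def by blast
qed

lemma poly_value_slice:
  assumes "i0 \<notin> I"
  shows "poly_value I (coeff_slice i0 j c) x = (\<Sum>m | c m \<noteq> 0 \<and> m i0 = j. c m * monomial_value I m x)"
proof -
  define D where "D = {m. c m \<noteq> 0 \<and> m i0 = j}"
  have restore: "(m(i0 := 0))(i0 := j) = m" if "m \<in> D" for m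
    using that unfolding D_def by (simp add: fun_eq_iff)
  have slice_D: "coeff_slice i0 j c (m(i0 := 0)) = c m" if "m \<in> D" for m
    using restore[OF that] unfolding coeff_slice_def by simp
  have supp: "{m. coeff_slice i0 j c m \<noteq> 0} = (\<lambda>m. m(i0 := 0)) ` D"
  proof (intro Set.set_eqI iffI)
    fix m assume "m \<in> {m. coeff_slice i0 j c m \<noteq> 0}"
    then have nz: "coeff_slice i0 j c m \<noteq> 0" by simp
    have "m(i0 := j) \<in> D" using coeff_slice_nonzero(2)[OF nz] unfolding D_def by simp
    then show "m \<in> (\<lambda>m. m(i0 := 0)) ` D"
      by (rule image_eqI[where f = "\<lambda>m. m(i0 := 0)", OF coeff_slice_nonzero(3)[OF nz]])
  next
    fix m assume "m \<in> (\<lambda>m. m(i0 := 0)) ` D"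
    then show "m \<in> {m. coeff_slice i0 j c m \<noteq> 0}" using slice_D unfolding D_def by auto
  qed
  have "inj_on (\<lambda>m. m(i0 := 0)) D"
    by (rule inj_onI) (metis restore)
  then have "poly_value I (coeff_slice i0 j c) x
      = (\<Sum>m\<in>D. coeff_slice i0 j c (m(i0 := 0)) * monomial_value I (m(i0 := 0)) x)"
    unfolding poly_value_def supp by (simp add: sum.reindex)
  also have "\<dots> = (\<Sum>m\<in>D. c m * monomial_value I m x)"
  proof (intro sum.cong refl)
    fix m assume "m \<in> D"
    have "monomial_value I (m(i0 := 0)) x = monomial_value I m x"
      unfolding monomial_value_def using assms by (intro prod.cong) auto
    then show "coeff_slice i0 j c (m(i0 := 0)) * monomial_value I (m(i0 := 0)) x = c m * monomial_value I m x"
      using slice_D[OF \<open>m \<in> D\<close>] by simp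
  qed
  finally show ?thesis unfolding D_def .
qed

lemma monomial_value_upd:
  assumes "finite I" "i0 \<notin> I"
  shows "monomial_value (insert i0 I) m (x(i0 := t)) = t ^ m i0 * monomial_value I m x"
proof -
  have "(\<Prod>i\<in>I. (x(i0 := t)) i ^ m i) = monomial_value I m x"
    unfolding monomial_value_def using assms(2) by (intro prod.cong) auto
  then show ?thesis unfolding monomial_value_def using assms by simp
qed

lemma poly_value_upd_eq_poly:
  assumes "finite I" "i0 \<notin> I" "rat_poly_coeffs (insert i0 I) c"
  obtains P where "\<And>t. poly_value (insert i0 I) c (x(i0 := t)) = poly P t"
    and "\<And>j. coeff P j = poly_value I (coeff_slice i0 j c) x"
proof -
  define Sc where "Sc = {m. c m \<noteq> 0}"
  define N where "N = Max ((\<lambda>m. m i0) ` Sc)"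
  define a where "a j = poly_value I (coeff_slice i0 j c) x" for j
  have finSc: "finite Sc" using assms(3) unfolding Sc_def rat_poly_coeffs_def by simp
  have le_N: "m i0 \<le> N" if "m \<in> Sc" for m
    using finSc that unfolding N_def by (intro Max_ge) auto
  have a_eq: "a j = (\<Sum>m | m \<in> Sc \<and> m i0 = j. c m * monomial_value I m x)" for j
    unfolding a_def poly_value_slice[OF assms(2)] Sc_def by simp
  have a_high: "a j = 0" if "N < j" for j
  proof -
    have "{m. m \<in> Sc \<and> m i0 = j} = {}" using le_N that by fastforce
    then show ?thesis by (simp only: a_eq sum.empty)
  qed
  define P where "P = (\<Sum>j\<le>N. monom (a j) j)"
  have "poly_value (insert i0 I) c (x(i0 := t)) = poly P t" for t
  proof -
    have "poly_value (insert i0 I) c (x(i0 := t)) = (\<Sum>m\<in>Sc. c m * monomial_value I m x * t ^ m i0)"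
      unfolding poly_value_def Sc_def monomial_value_upd[OF assms(1,2)] by (simp add: mult_ac)
    also have "\<dots> = (\<Sum>j\<le>N. \<Sum>m | m \<in> Sc \<and> m i0 = j. c m * monomial_value I m x * t ^ m i0)"
      by (rule sum.group[symmetric]) (use finSc le_N in auto)
    also have "\<dots> = poly P t"
      unfolding P_def poly_sum poly_monom a_eq sum_distrib_right by (intro sum.cong refl) auto
    finally show ?thesis .
  qed
  moreover have "coeff P j = a j" for j
    unfolding P_def coeff_sum coeff_monom using a_high by (cases "j \<le> N") auto
  ultimately show ?thesis using that unfolding a_def by blast
qed

lemma finite_roots_poly_value_upd:
  assumes "finite I" "i0 \<notin> I" "alg_indep_Q I x" "rat_poly_coeffs (insert i0 I) c" "c m0 \<noteq> 0"
  shows "finite {t. poly_value (insert i0 I) c (x(i0 := t)) = 0}"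
proof -
  obtain P where P: "\<And>t. poly_value (insert i0 I) c (x(i0 := t)) = poly P t"
    "\<And>j. coeff P j = poly_value I (coeff_slice i0 j c) x"
    using poly_value_upd_eq_poly[OF assms(1,2,4)] by blast
  have "coeff_slice i0 (m0 i0) c (m0(i0 := 0)) \<noteq> 0"
    using assms(5) by (simp add: coeff_slice_def)
  then have "coeff P (m0 i0) \<noteq> 0"
    using assms(3) rat_poly_coeffs_slice[OF assms(4)] unfolding P(2) alg_indep_Q_iff by blast
  then have "P \<noteq> 0" by auto
  then show ?thesis unfolding P(1) by (rule poly_roots_finite)
qed

lemma countable_rat_poly_coeffs:
  assumes "finite J"
  shows "countable {c. rat_poly_coeffs J c}"
proof -
  define M where "M = {m :: 'a \<Rightarrow> nat. \<forall>i. i \<notin> J \<longrightarrow> m i = 0}"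
  obtain js where js: "set js = J" using finite_list[OF assms] by blast
  have "inj_on (\<lambda>m. map m js) M"
  proof (rule inj_onI)
    fix m1 m2 assume M: "m1 \<in> M" "m2 \<in> M" and eq: "map m1 js = map m2 js"
    then have "\<forall>i\<in>J. m1 i = m2 i" by (simp add: js)
    then show "m1 = m2" using M unfolding M_def by (auto simp: fun_eq_iff)
  qed
  then have cM: "countable M" by (rule countable_image_inj_on[OF countableI_type])
  define graph where "graph c = {(m, c m) | m. c m \<noteq> 0}" for c :: "('a \<Rightarrow> nat) \<Rightarrow> real"
  have mem_graph: "(m, r) \<in> graph c \<longleftrightarrow> c m \<noteq> 0 \<and> r = c m" for m r c
    unfolding graph_def by blast
  have "graph ` {c. rat_poly_coeffs J c} \<subseteq> {G. finite G \<and> G \<subseteq> M \<times> \<rat>}"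
  proof (intro image_subsetI CollectI conjI)
    fix c assume "c \<in> {c. rat_poly_coeffs J c}"
    then have c: "rat_poly_coeffs J c" by simp
    have "graph c = (\<lambda>m. (m, c m)) ` {m. c m \<noteq> 0}" unfolding graph_def by blast
    then show "finite (graph c)" using c unfolding rat_poly_coeffs_def by simp
    show "graph c \<subseteq> M \<times> \<rat>"
      using c unfolding rat_poly_coeffs_def M_def by (auto simp: mem_graph)
  qed
  then have "countable (graph ` {c. rat_poly_coeffs J c})"
    by (rule countable_subset) (intro countable_Collect_finite_subset countable_SIGMA cM countable_rat)
  moreover have "inj_on graph {c. rat_poly_coeffs J c}"
  proof (rule inj_onI, rule ext)
    fix c1 c2 m assume eq: "graph c1 = graph c2"
    show "c1 m = c2 m"
    proof (cases "c1 m = 0 \<and> c2 m = 0")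
      case False
      then have "(m, c1 m) \<in> graph c1 \<or> (m, c2 m) \<in> graph c2" by (auto simp: mem_graph)
      then have "(m, c1 m) \<in> graph c2 \<or> (m, c2 m) \<in> graph c1" using eq by simp
      then show ?thesis by (auto simp: mem_graph)
    qed simp
  qed
  ultimately show ?thesis by (rule countable_image_inj_on)
qed

lemma alg_indep_Q_extend:
  assumes "finite I" "i0 \<notin> I" "alg_indep_Q I x"
  shows "\<exists>t. alg_indep_Q (insert i0 I) (x(i0 := t))"
proof -
  define C where "C = {c. rat_poly_coeffs (insert i0 I) c \<and> (\<exists>m. c m \<noteq> 0)}"
  define bad where "bad = (\<Union>c\<in>C. {t. poly_value (insert i0 I) c (x(i0 := t)) = 0})"
  have "countable C"
    unfolding C_def using countable_rat_poly_coeffs[of "insert i0 I"] assms(1)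
    by (auto intro: countable_subset)
  then have "countable bad"
    unfolding bad_def
  proof (rule countable_UN)
    fix c assume "c \<in> C"
    then obtain m0 where "rat_poly_coeffs (insert i0 I) c" "c m0 \<noteq> 0" unfolding C_def by blast
    then show "countable {t. poly_value (insert i0 I) c (x(i0 := t)) = 0}"
      by (intro countable_finite finite_roots_poly_value_upd[OF assms])
  qed
  then obtain t where t: "t \<notin> bad"
    using uncountable_UNIV_real countable_subset[of UNIV bad] by blast
  have "alg_indep_Q (insert i0 I) (x(i0 := t))"
    unfolding alg_indep_Q_iff
  proof (rule allI, rule impI, rule ccontr)
    fix c assume "rat_poly_coeffs (insert i0 I) c \<and> poly_value (insert i0 I) c (x(i0 := t)) = 0"
      and "\<not> (\<forall>m. c m = 0)"
    then have "t \<in> bad" unfolding bad_def C_def by blast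
    then show False using t by blast
  qed
  then show ?thesis ..
qed

lemma alg_indep_Q_exists: "finite I \<Longrightarrow> \<exists>x. alg_indep_Q I x"
proof (induction I rule: finite_induct)
  case empty
  then show ?case using alg_indep_Q_empty by blast
next
  case (insert i0 I)
  then obtain x where "alg_indep_Q I x" by blast
  then show ?case using alg_indep_Q_extend[OF insert(1,2)] by blast
qed

lemma generic_SOME:
  assumes "finite V"
  shows "generic d V (SOME p. generic d V p)"
proof -
  obtain x where "alg_indep_Q (V \<times> {..<d}) x" using alg_indep_Q_exists[of "V \<times> {..<d}"] assms by auto
  then have "generic d V (\<lambda>u k. x (u, k))" unfolding generic_def by (simp only: case_prod_eta)
  then show ?thesis by (rule someI[of "generic d V"])
qed

section \<open>Rows of the rigidity matrix\<close>

lemma rig_entry_outside: "w \<notin> e \<Longrightarrow> rig_entry p e w k = 0"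
  unfolding rig_entry_def by simp

lemma rig_entry_pair: "u \<noteq> z \<Longrightarrow> rig_entry p {u, z} u k = p u k - p z k"
proof -
  assume "u \<noteq> z"
  then have "{u, z} - {u} = {z}" by auto
  then show ?thesis unfolding rig_entry_def by simp
qed

lemma rig_entry_translate: "rig_entry (\<lambda>u k. p u k - s k) = rig_entry p"
  unfolding rig_entry_def by (intro ext) simp

lemma card_2_ex_other: "card e = 2 \<Longrightarrow> u \<in> e \<Longrightarrow> \<exists>z. e = {u, z} \<and> z \<noteq> u"
  by (auto simp: card_2_iff)

lemma sum_rig_entry_eq_0:
  assumes "card e = 2" "e \<subseteq> U" "finite U"
  shows "(\<Sum>w\<in>U. rig_entry p e w k) = 0"
proof -
  obtain a b where ab: "e = {a, b}" "a \<noteq> b" using assms(1) by (auto simp: card_2_iff)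
  have "(\<Sum>w\<in>U. rig_entry p e w k) = (\<Sum>w\<in>e. rig_entry p e w k)"
    by (rule sum.mono_neutral_right) (use assms in \<open>auto simp: rig_entry_outside\<close>)
  also have "\<dots> = 0" using ab rig_entry_pair[of a b p k] rig_entry_pair[of b a p k]
    by (simp add: insert_commute)
  finally show ?thesis .
qed

definition scale_fun :: "real \<Rightarrow> ('b \<Rightarrow> real) \<Rightarrow> ('b \<Rightarrow> real)" where
  "scale_fun c f = (\<lambda>x. c * f x)"

interpretation FS: vector_space "scale_fun :: real \<Rightarrow> ('b \<Rightarrow> real) \<Rightarrow> ('b \<Rightarrow> real)"
  by unfold_locales (auto simp: fun_eq_iff algebra_simps scale_fun_def func_plus)

definition rig_row :: "nat \<Rightarrow> ('a \<Rightarrow> nat \<Rightarrow> real) \<Rightarrow> 'a set \<Rightarrow> ('a \<times> nat \<Rightarrow> real)" where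
  "rig_row d p e = (\<lambda>(w, k). if k < d then rig_entry p e w k else 0)"

lemma sum_fun_apply: "(\<Sum>e\<in>F. f e) x = (\<Sum>e\<in>F. f e x)"
  by (induction F rule: infinite_finite_induct) (auto simp: func_plus func_zero)

lemma sum_rig_rows_eq_0_iff:
  "(\<Sum>e\<in>F. scale_fun (c e) (rig_row d p e)) = 0
    \<longleftrightarrow> (\<forall>w k. k < d \<longrightarrow> (\<Sum>e\<in>F. c e * rig_entry p e w k) = 0)"
proof -
  have col: "(\<Sum>e\<in>F. scale_fun (c e) (rig_row d p e)) (w, k)
      = (if k < d then (\<Sum>e\<in>F. c e * rig_entry p e w k) else 0)" for w k
    unfolding sum_fun_apply scale_fun_def rig_row_def by (cases "k < d") auto
  show ?thesis
  proof
    assume "(\<Sum>e\<in>F. scale_fun (c e) (rig_row d p e)) = 0"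
    then have "(\<Sum>e\<in>F. scale_fun (c e) (rig_row d p e)) (w, k) = 0" for w k by (simp add: func_zero)
    then show "\<forall>w k. k < d \<longrightarrow> (\<Sum>e\<in>F. c e * rig_entry p e w k) = 0" using col by (metis (full_types))
  next
    assume "\<forall>w k. k < d \<longrightarrow> (\<Sum>e\<in>F. c e * rig_entry p e w k) = 0"
    then show "(\<Sum>e\<in>F. scale_fun (c e) (rig_row d p e)) = 0"
      by (intro ext) (auto simp: col func_zero)
  qed
qed

lemma rows_indep_iff_sum_rig_rows:
  "rows_indep d p F \<longleftrightarrow>
    (\<forall>c. (\<Sum>e\<in>F. scale_fun (c e) (rig_row d p e)) = 0 \<longrightarrow> (\<forall>e\<in>F. c e = 0))"
  unfolding rows_indep_def sum_rig_rows_eq_0_iff ..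

lemma rows_indep_empty: "rows_indep d p {}"
  unfolding rows_indep_def by simp

lemma rows_indep_subset:
  assumes "finite F" "rows_indep d p F" "F' \<subseteq> F"
  shows "rows_indep d p F'"
  unfolding rows_indep_def
proof (intro allI impI ballI)
  fix c e assume c: "\<forall>w k. k < d \<longrightarrow> (\<Sum>e\<in>F'. c e * rig_entry p e w k) = 0" and e: "e \<in> F'"
  define c' where "c' e = (if e \<in> F' then c e else 0)" for e
  have "(\<Sum>e\<in>F. c' e * rig_entry p e w k) = (\<Sum>e\<in>F'. c e * rig_entry p e w k)" for w k
    by (rule sum.mono_neutral_cong_right) (use assms in \<open>auto simp: c'_def\<close>)
  then have "\<forall>e\<in>F. c' e = 0" using assms(2) c unfolding rows_indep_def by simp
  then have "c' e = 0" using e assms(3) by blast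
  then show "c e = 0" using e unfolding c'_def by simp
qed

lemma rows_indep_imp_independent:
  assumes fin: "finite F" and ind: "rows_indep d p F"
  shows "inj_on (rig_row d p) F" "FS.independent (rig_row d p ` F)"
proof -
  have zero: "\<forall>e\<in>F. c e = 0" if "(\<Sum>e\<in>F. scale_fun (c e) (rig_row d p e)) = 0" for c
    using ind that unfolding rows_indep_iff_sum_rig_rows by blast
  show inj: "inj_on (rig_row d p) F"
  proof (rule inj_onI, rule ccontr)
    fix e1 e2 assume e: "e1 \<in> F" "e2 \<in> F" "rig_row d p e1 = rig_row d p e2" "e1 \<noteq> e2"
    define c where "c e = (if e = e1 then 1 else 0) - (if e = e2 then 1 else (0::real))" for e
    have "(\<Sum>e\<in>F. scale_fun (c e) (rig_row d p e)) x
        = (\<Sum>e\<in>F. (if e = e1 then rig_row d p e1 x else 0) - (if e = e2 then rig_row d p e2 x else 0))" for x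
      unfolding sum_fun_apply scale_fun_def c_def by (intro sum.cong refl) auto
    also have "\<dots> x = 0" for x unfolding sum_subtractf using e fin by simp
    finally have "c e1 = 0" using zero[of c] e(1) unfolding func_zero by blast
    then show False using e(4) unfolding c_def by simp
  qed
  show "FS.independent (rig_row d p ` F)"
  proof (rule FS.independent_if_scalars_zero)
    fix f r assume "(\<Sum>x\<in>rig_row d p ` F. scale_fun (f x) x) = 0" and r: "r \<in> rig_row d p ` F"
    then have "\<forall>e\<in>F. f (rig_row d p e) = 0"
      using zero[of "\<lambda>e. f (rig_row d p e)"] unfolding sum.reindex[OF inj] comp_def by blast
    then show "f r = 0" using r by auto
  qed (use fin in simp)
qed

lemma independent_imp_rows_indep:
  assumes fin: "finite F" and inj: "inj_on (rig_row d p) F" and ind: "FS.independent (rig_row d p ` F)"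
  shows "rows_indep d p F"
  unfolding rows_indep_iff_sum_rig_rows
proof (intro allI impI ballI)
  fix c e assume s: "(\<Sum>e\<in>F. scale_fun (c e) (rig_row d p e)) = 0" and e: "e \<in> F"
  define u where "u r = c (the_inv_into F (rig_row d p) r)" for r
  have "(\<Sum>r\<in>rig_row d p ` F. scale_fun (u r) r) = (\<Sum>e\<in>F. scale_fun (c e) (rig_row d p e))"
    unfolding sum.reindex[OF inj] comp_def u_def using the_inv_into_f_f[OF inj] by (intro sum.cong refl) auto
  then have "u (rig_row d p e) = 0"
    using s ind fin e unfolding FS.independent_explicit_module by auto
  then show "c e = 0" unfolding u_def using the_inv_into_f_f[OF inj e] by simp
qed

lemma finite_rig_rank_candidates: "finite F \<Longrightarrow> finite {card F' | F'. F' \<subseteq> F \<and> rows_indep d p F'}"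
  by (rule finite_subset[of _ "card ` Pow F"]) auto

lemma card_le_rig_rank: "finite F \<Longrightarrow> F' \<subseteq> F \<Longrightarrow> rows_indep d p F' \<Longrightarrow> card F' \<le> rig_rank d p F"
  unfolding rig_rank_def by (rule Max_ge[OF finite_rig_rank_candidates]) auto

lemma rig_rank_witness:
  assumes "finite F"
  obtains F' where "F' \<subseteq> F" "rows_indep d p F'" "card F' = rig_rank d p F"
proof -
  have "rig_rank d p F \<in> {card F' | F'. F' \<subseteq> F \<and> rows_indep d p F'}"
    unfolding rig_rank_def using rows_indep_empty by (intro Max_in[OF finite_rig_rank_candidates[OF assms]]) auto
  then obtain F' where "F' \<subseteq> F" "rows_indep d p F'" "card F' = rig_rank d p F" by auto
  then show ?thesis by (rule that)
qed

lemma rig_rank_le_card: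
  assumes "finite F"
  shows "rig_rank d p F \<le> card F"
proof -
  obtain F' where F': "F' \<subseteq> F" "card F' = rig_rank d p F" by (rule rig_rank_witness[OF assms])
  show ?thesis using card_mono[OF assms F'(1)] F'(2) by simp
qed

lemma rig_rank_mono:
  assumes "finite G" "F \<subseteq> G"
  shows "rig_rank d p F \<le> rig_rank d p G"
proof -
  obtain F' where "F' \<subseteq> F" "rows_indep d p F'" "card F' = rig_rank d p F"
    by (rule rig_rank_witness[OF finite_subset[OF assms(2,1)]])
  then show ?thesis using card_le_rig_rank[OF assms(1), of F'] assms(2) by simp
qed

lemma rows_indep_iff_rig_rank:
  assumes fin: "finite F"
  shows "rows_indep d p F \<longleftrightarrow> rig_rank d p F = card F"
proof
  assume "rows_indep d p F"
  then show "rig_rank d p F = card F"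
    using card_le_rig_rank[OF fin order_refl] rig_rank_le_card[OF fin] by (simp add: le_antisym)
next
  assume r: "rig_rank d p F = card F"
  obtain F' where "F' \<subseteq> F" "rows_indep d p F'" "card F' = rig_rank d p F"
    by (rule rig_rank_witness[OF fin])
  then show "rows_indep d p F" using card_subset_eq[OF fin, of F'] r by simp
qed

lemma rows_indep_extend_spanning:
  assumes fin: "finite F" and sub: "A0 \<subseteq> F" and ind0: "rows_indep d p A0"
  obtains A where "A0 \<subseteq> A" "A \<subseteq> F" "rows_indep d p A"
    "rig_row d p ` F \<subseteq> FS.span (rig_row d p ` A)"
proof -
  have fin0: "finite A0" using finite_subset[OF sub fin] .
  note i0 = rows_indep_imp_independent[OF fin0 ind0]
  obtain B where B: "rig_row d p ` A0 \<subseteq> B" "B \<subseteq> rig_row d p ` F" "FS.independent B"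
      "rig_row d p ` F \<subseteq> FS.span B"
    using FS.maximal_independent_subset_extend[of "rig_row d p ` A0" "rig_row d p ` F"] sub i0 by blast
  define rep where "rep b = (SOME e. e \<in> F \<and> rig_row d p e = b)" for b
  have rep: "rep b \<in> F \<and> rig_row d p (rep b) = b" if "b \<in> B" for b
    unfolding rep_def by (rule someI_ex) (use B(2) that in blast)
  define X where "X = B - rig_row d p ` A0"
  define A where "A = A0 \<union> rep ` X"
  have AF: "A \<subseteq> F" unfolding A_def X_def using sub rep by auto
  have finA: "finite A" using finite_subset[OF AF fin] .
  have finB: "finite B" using finite_subset[OF B(2)] fin by simp
  have finX: "finite X" unfolding X_def using finB by simp
  have "(\<lambda>b. rig_row d p (rep b)) ` X = (\<lambda>b. b) ` X"
    by (rule image_cong) (use rep in \<open>auto simp: X_def\<close>)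
  then have "rig_row d p ` rep ` X = X" by (simp add: image_image)
  then have rowA: "rig_row d p ` A = B" unfolding A_def X_def image_Un using B(1) by blast
  have "card A \<le> card A0 + card (rep ` X)" unfolding A_def by (rule card_Un_le)
  also have "\<dots> \<le> card (rig_row d p ` A0) + card X"
    using card_image[OF i0(1)] card_image_le[OF finX, of rep] by simp
  also have "\<dots> = card B"
    unfolding X_def using card_Diff_subset[OF _ B(1)] card_mono[OF finB B(1)] fin0 by simp
  finally have "card (rig_row d p ` A) = card A"
    using card_image_le[OF finA, of "rig_row d p"] rowA by simp
  then have "inj_on (rig_row d p) A" using eq_card_imp_inj_on[OF finA] by blast
  then have "rows_indep d p A" using independent_imp_rows_indep[OF finA] rowA B(3) by simp
  moreover have "A0 \<subseteq> A" unfolding A_def by blast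
  ultimately show ?thesis using that AF B(4) rowA by blast
qed

lemma card_le_rig_rank_if_span:
  assumes finA: "finite A" and finB: "finite B" and indA: "rows_indep d p A"
    and span: "rig_row d p ` A \<subseteq> FS.span (rig_row d p ` B)"
  shows "card A \<le> rig_rank d p B"
proof -
  obtain C where C: "{} \<subseteq> C" "C \<subseteq> B" "rows_indep d p C" "rig_row d p ` B \<subseteq> FS.span (rig_row d p ` C)"
    by (rule rows_indep_extend_spanning[OF finB empty_subsetI rows_indep_empty])
  have finC: "finite C" using finite_subset[OF C(2) finB] .
  have "rig_row d p ` A \<subseteq> FS.span (rig_row d p ` C)"
    using span FS.span_mono[OF C(4)] unfolding FS.span_span by blast
  moreover note iA = rows_indep_imp_independent[OF finA indA]
  ultimately have "card (rig_row d p ` A) \<le> card (rig_row d p ` C)"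
    using FS.independent_span_bound[of "rig_row d p ` C" "rig_row d p ` A"] finC by blast
  also have "\<dots> \<le> card C" using finC by (rule card_image_le)
  also have "\<dots> \<le> rig_rank d p B" using card_le_rig_rank[OF finB C(2,3)] .
  finally show ?thesis using card_image[OF iA(1)] by simp
qed

lemma rows_indep_extend_basis:
  assumes fin: "finite F" and sub: "A0 \<subseteq> F" and ind0: "rows_indep d p A0"
  obtains A where "A0 \<subseteq> A" "A \<subseteq> F" "rows_indep d p A" "card A = rig_rank d p F"
proof -
  obtain A where A: "A0 \<subseteq> A" "A \<subseteq> F" "rows_indep d p A" "rig_row d p ` F \<subseteq> FS.span (rig_row d p ` A)"
    by (rule rows_indep_extend_spanning[OF assms])
  have finA: "finite A" using finite_subset[OF A(2) fin] .
  obtain F' where F': "F' \<subseteq> F" "rows_indep d p F'" "card F' = rig_rank d p F"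
    by (rule rig_rank_witness[OF fin])
  have "rig_row d p ` F' \<subseteq> FS.span (rig_row d p ` A)" using F'(1) A(4) by (meson image_mono order_trans)
  then have "rig_rank d p F \<le> rig_rank d p A"
    using card_le_rig_rank_if_span[OF finite_subset[OF F'(1) fin] finA F'(2)] F'(3) by simp
  also have "\<dots> = card A" using rows_indep_iff_rig_rank[OF finA] A(3) by simp
  finally have "card A = rig_rank d p F" using card_le_rig_rank[OF fin A(2,3)] by simp
  then show ?thesis by (rule that[OF A(1-3)])
qed

lemma rig_row_in_span_if_dependence:
  assumes "finite X" "f \<notin> X" "(\<Sum>e\<in>insert f X. scale_fun (c e) (rig_row d p e)) = 0" "c f \<noteq> 0"
  shows "rig_row d p f \<in> FS.span (rig_row d p ` X)"
proof -
  have "scale_fun (c f) (rig_row d p f) = - (\<Sum>e\<in>X. scale_fun (c e) (rig_row d p e))"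
    using assms(1-3) by (simp add: eq_neg_iff_add_eq_0)
  also have "\<dots> \<in> FS.span (rig_row d p ` X)"
    by (intro FS.span_neg FS.span_sum FS.span_scale FS.span_base) auto
  finally have "scale_fun (1 / c f) (scale_fun (c f) (rig_row d p f)) \<in> FS.span (rig_row d p ` X)"
    by (rule FS.span_scale)
  then show ?thesis using assms(4) by (simp add: scale_fun_def)
qed

lemma rows_indep_exchange:
  assumes fin: "finite F" and indF: "rows_indep d p F" and f: "f \<in> F" and g: "g \<notin> F"
    and dep: "(\<Sum>e\<in>insert g F. scale_fun (c e) (rig_row d p e)) = 0" and cf: "c f \<noteq> 0"
  shows "rows_indep d p (insert g (F - {f}))"
proof -
  define X where "X = insert g (F - {f})"
  have finX: "finite X" unfolding X_def using fin by simp
  have fX: "f \<notin> X" "insert g F = insert f X" unfolding X_def using f g by auto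
  then have "rig_row d p f \<in> FS.span (rig_row d p ` X)"
    using rig_row_in_span_if_dependence[where c = c, OF finX fX(1) _ cf] dep by simp
  then have "rig_row d p ` F \<subseteq> FS.span (rig_row d p ` X)"
    unfolding X_def by (auto intro: FS.span_base)
  then have "card F \<le> rig_rank d p X" by (rule card_le_rig_rank_if_span[OF fin finX indF])
  moreover have "card X = card F"
    unfolding X_def using fin f g card_Suc_Diff1[OF fin f] by simp
  ultimately show ?thesis
    using rig_rank_le_card[OF finX, of d p] rows_indep_iff_rig_rank[OF finX, of d p] unfolding X_def by simp
qed

text \<open>The column of s is nonzero in the row of g, so the dependence created by g involves an
  edge through s.\<close>
lemma rows_indep_exchange_at_vertex:
  assumes fin: "finite F" and indF: "rows_indep d p F" and dep: "\<not> rows_indep d p (insert g F)"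
    and gs: "k < d" "rig_entry p g s k \<noteq> 0"
  obtains f where "f \<in> F" "s \<in> f" "rows_indep d p (insert g (F - {f}))"
proof -
  have gF: "g \<notin> F" using indF dep by (metis insert_absorb)
  obtain c where c0: "\<forall>w k. k < d \<longrightarrow> (\<Sum>e\<in>insert g F. c e * rig_entry p e w k) = 0"
    and cnz: "\<exists>e\<in>insert g F. c e \<noteq> 0"
    using dep unfolding rows_indep_def by blast
  have split: "(\<Sum>e\<in>insert g F. c e * rig_entry p e w k)
      = c g * rig_entry p g w k + (\<Sum>e\<in>F. c e * rig_entry p e w k)" for w k
    using fin gF by simp
  have "c g \<noteq> 0"
  proof
    assume "c g = 0"
    then have "\<forall>e\<in>F. c e = 0" using indF c0 unfolding rows_indep_def split by simp
    then show False using cnz \<open>c g = 0\<close> by blast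
  qed
  then have "(\<Sum>e\<in>F. c e * rig_entry p e s k) \<noteq> 0"
    using c0 gs unfolding split by (metis add.right_neutral mult_eq_0_iff)
  then obtain f where f: "f \<in> F" "c f * rig_entry p f s k \<noteq> 0"
    using sum.not_neutral_contains_not_neutral by blast
  have "s \<in> f" using f(2) rig_entry_outside by (metis mult_zero_right)
  moreover have "rows_indep d p (insert g (F - {f}))"
    using rows_indep_exchange[OF fin indF f(1) gF] c0 f(2) unfolding sum_rig_rows_eq_0_iff by simp
  ultimately show ?thesis using that f(1) by blast
qed

section \<open>Generic realisations have maximal rank\<close>

definition gram_mat :: "nat \<Rightarrow> ('a \<Rightarrow> nat \<Rightarrow> real) \<Rightarrow> (nat \<Rightarrow> 'a set) \<Rightarrow> nat \<Rightarrow> 'a set \<Rightarrow> real mat" where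
  "gram_mat d p f n W =
     mat n n (\<lambda>(i, j). \<Sum>cl\<in>W \<times> {..<d}. rig_row d p (f i) cl * rig_row d p (f j) cl)"

lemma rig_row_outside: "e \<subseteq> W \<Longrightarrow> cl \<notin> W \<times> {..<d} \<Longrightarrow> rig_row d p e cl = 0"
  unfolding rig_row_def rig_entry_def by (cases cl) auto

lemma gram_mat_carrier: "gram_mat d p f n W \<in> carrier_mat n n"
  unfolding gram_mat_def by simp

definition rig_row_comb :: "nat \<Rightarrow> ('a \<Rightarrow> nat \<Rightarrow> real) \<Rightarrow> (nat \<Rightarrow> 'a set) \<Rightarrow> nat \<Rightarrow> real vec \<Rightarrow> ('a \<times> nat \<Rightarrow> real)" where
  "rig_row_comb d p f n v = (\<lambda>cl. \<Sum>j<n. v $ j * rig_row d p (f j) cl)"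

lemma gram_mat_mult_vec_nth:
  assumes "i < n" "dim_vec v = n"
  shows "(gram_mat d p f n W *\<^sub>v v) $ i
    = (\<Sum>cl\<in>W \<times> {..<d}. rig_row d p (f i) cl * rig_row_comb d p f n v cl)"
proof -
  have "(gram_mat d p f n W *\<^sub>v v) $ i
      = (\<Sum>j<n. (\<Sum>cl\<in>W \<times> {..<d}. rig_row d p (f i) cl * rig_row d p (f j) cl) * v $ j)"
    using assms unfolding gram_mat_def by (auto simp: scalar_prod_def atLeast0LessThan intro!: sum.cong)
  also have "\<dots> = (\<Sum>cl\<in>W \<times> {..<d}. rig_row d p (f i) cl * rig_row_comb d p f n v cl)"
    unfolding rig_row_comb_def sum_distrib_right sum_distrib_left by (subst sum.swap) (simp add: mult_ac)
  finally show ?thesis .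
qed

lemma rows_indep_iff_rig_row_comb:
  assumes inj: "inj_on f {..<n}"
  shows "rows_indep d p (f ` {..<n}) \<longleftrightarrow> (\<forall>v \<in> carrier_vec n. rig_row_comb d p f n v = 0 \<longrightarrow> v = 0\<^sub>v n)"
proof -
  have comb_sum: "(\<Sum>e\<in>f ` {..<n}. scale_fun (c e) (rig_row d p e)) = rig_row_comb d p f n (vec n (\<lambda>j. c (f j)))"
    for c
    unfolding rig_row_comb_def fun_eq_iff sum_fun_apply sum.reindex[OF inj] scale_fun_def by simp
  show ?thesis
  proof
    assume ind: "rows_indep d p (f ` {..<n})"
    show "\<forall>v \<in> carrier_vec n. rig_row_comb d p f n v = 0 \<longrightarrow> v = 0\<^sub>v n"
    proof (intro ballI impI)
      fix v :: "real vec" assume v: "v \<in> carrier_vec n" "rig_row_comb d p f n v = 0"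
      define c where "c e = v $ the_inv_into {..<n} f e" for e
      have "v = vec n (\<lambda>j. c (f j))" using v(1) the_inv_into_f_f[OF inj] unfolding c_def by auto
      then have "\<forall>e\<in>f ` {..<n}. c e = 0"
        using ind v(2) comb_sum[of c] unfolding rows_indep_iff_sum_rig_rows by simp
      then show "v = 0\<^sub>v n" using \<open>v = vec n (\<lambda>j. c (f j))\<close> by auto
    qed
  next
    assume "\<forall>v \<in> carrier_vec n. rig_row_comb d p f n v = 0 \<longrightarrow> v = 0\<^sub>v n"
    then show "rows_indep d p (f ` {..<n})"
      unfolding rows_indep_iff_sum_rig_rows comb_sum by (auto simp: vec_eq_iff)
  qed
qed

lemma gram_mat_mult_vec_eq_0_iff:
  assumes finW: "finite W" and sub: "\<forall>i<n. f i \<subseteq> W" and v: "v \<in> carrier_vec n"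
  shows "gram_mat d p f n W *\<^sub>v v = 0\<^sub>v n \<longleftrightarrow> rig_row_comb d p f n v = 0"
proof
  note G = gram_mat_mult_vec_nth[OF _ carrier_vecD[OF v]]
  assume Gv: "gram_mat d p f n W *\<^sub>v v = 0\<^sub>v n"
  \<comment> \<open>the squared norm of the combination is the quadratic form of the Gram matrix at v\<close>
  have "(\<Sum>cl\<in>W \<times> {..<d}. rig_row_comb d p f n v cl * rig_row_comb d p f n v cl)
      = (\<Sum>i<n. v $ i * (\<Sum>cl\<in>W \<times> {..<d}. rig_row d p (f i) cl * rig_row_comb d p f n v cl))"
    unfolding rig_row_comb_def[of d p f n v] sum_distrib_left sum_distrib_right
    by (subst sum.swap) (simp add: mult_ac)
  also have "\<dots> = (\<Sum>i<n. v $ i * (gram_mat d p f n W *\<^sub>v v) $ i)"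
    by (rule sum.cong[OF refl]) (simp add: G)
  also have "\<dots> = 0" using Gv by simp
  finally have "\<forall>cl\<in>W \<times> {..<d}. rig_row_comb d p f n v cl = 0"
    using sum_nonneg_eq_0_iff[of "W \<times> {..<d}" "\<lambda>cl. rig_row_comb d p f n v cl * rig_row_comb d p f n v cl"] finW
    by simp
  moreover have "rig_row_comb d p f n v cl = 0" if "cl \<notin> W \<times> {..<d}" for cl
    unfolding rig_row_comb_def using rig_row_outside[OF _ that] sub by simp
  ultimately show "rig_row_comb d p f n v = 0" by (auto simp: fun_eq_iff)
next
  assume comb0: "rig_row_comb d p f n v = 0"
  show "gram_mat d p f n W *\<^sub>v v = 0\<^sub>v n"
  proof (rule eq_vecI)
    fix i assume "i < dim_vec (0\<^sub>v n :: real vec)"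
    then have i: "i < n" by simp
    show "(gram_mat d p f n W *\<^sub>v v) $ i = 0\<^sub>v n $ i"
      unfolding gram_mat_mult_vec_nth[OF i carrier_vecD[OF v]] comb0 using i by (simp add: func_zero)
  qed (simp add: gram_mat_def)
qed

lemma rows_indep_iff_det_gram_mat:
  assumes finW: "finite W" and sub: "\<forall>i<n. f i \<subseteq> W" and inj: "inj_on f {..<n}"
  shows "rows_indep d p (f ` {..<n}) \<longleftrightarrow> det (gram_mat d p f n W) \<noteq> 0"
  unfolding rows_indep_iff_rig_row_comb[OF inj] det_0_iff_vec_prod_zero[OF gram_mat_carrier]
  using gram_mat_mult_vec_eq_0_iff[OF finW sub] by blast

lemma rat_poly_fun_rig_row:
  assumes finW: "finite W" and e: "e \<subseteq> W"
  shows "rat_poly_fun (W \<times> {..<d}) (\<lambda>x. rig_row d (\<lambda>u k. x (u, k)) e cl)"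
proof -
  obtain w k where cl: "cl = (w, k)" by (cases cl)
  have finI: "finite (W \<times> {..<d})" using finW by simp
  show ?thesis
  proof (cases "w \<in> e \<and> k < d")
    case True
    have "rat_poly_fun (W \<times> {..<d}) (\<lambda>x. \<Sum>z\<in>e - {w}. x (w, k) - x (z, k))"
      using True e finite_subset[OF e finW] finI
      by (intro rat_poly_fun_sum rat_poly_fun_diff rat_poly_fun_var) auto
    then show ?thesis unfolding rig_row_def rig_entry_def cl using True by simp
  next
    case False
    then have "rig_row d (\<lambda>u k. x (u, k)) e cl = 0" for x :: "'a \<times> nat \<Rightarrow> real"
      unfolding rig_row_def rig_entry_def cl by auto
    then show ?thesis using rat_poly_fun_const[of 0] by simp
  qed
qed

lemma rat_poly_fun_det_gram_mat:
  assumes finW: "finite W" and sub: "\<forall>i<n. f i \<subseteq> W"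
  shows "rat_poly_fun (W \<times> {..<d}) (\<lambda>x. det (gram_mat d (\<lambda>u k. x (u, k)) f n W))"
proof -
  have finI: "finite (W \<times> {..<d})" using finW by simp
  define P where "P = {\<pi>. \<pi> permutes {0..<n}}"
  define entry where "entry x i j = (\<Sum>cl\<in>W \<times> {..<d}. rig_row d (\<lambda>u k. x (u, k)) (f i) cl
      * rig_row d (\<lambda>u k. x (u, k)) (f j) cl)" for x i j
  have perm: "\<pi> i < n" if "\<pi> \<in> P" "i < n" for \<pi> i
    using that permutes_in_image unfolding P_def by fastforce
  have "det (gram_mat d (\<lambda>u k. x (u, k)) f n W)
      = (\<Sum>\<pi>\<in>P. of_int (sign \<pi>) * (\<Prod>i\<in>{0..<n}. entry x i (\<pi> i)))" for x
    unfolding det_def'[OF gram_mat_carrier] P_def[symmetric]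
    by (intro sum.cong refl arg_cong2[where f = "(*)"] prod.cong) (auto simp: gram_mat_def entry_def perm)
  moreover have "rat_poly_fun (W \<times> {..<d}) (\<lambda>x. \<Sum>\<pi>\<in>P. of_int (sign \<pi>) * (\<Prod>i\<in>{0..<n}. entry x i (\<pi> i)))"
    unfolding entry_def using finI sub perm finite_permutations[of "{0..<n}"]
    by (intro rat_poly_fun_sum rat_poly_fun_mult rat_poly_fun_const rat_poly_fun_prod
        rat_poly_fun_rig_row finW) (auto simp: P_def)
  ultimately show ?thesis by simp
qed

lemma rows_indep_at_generic:
  assumes finW: "finite W" and gen: "generic d W p" and finF: "finite F"
    and sub: "\<forall>e\<in>F. e \<subseteq> W" and indq: "rows_indep d q F"
  shows "rows_indep d p F"
proof -
  obtain f where f: "bij_betw f {..<card F} F" using ex_bij_betw_nat_finite[OF finF] lessThan_atLeast0 by metis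
  define n where "n = card F"
  have inj: "inj_on f {..<n}" and img: "f ` {..<n} = F" using f unfolding bij_betw_def n_def by auto
  have subf: "\<forall>i<n. f i \<subseteq> W" using sub img by auto
  define D where "D x = det (gram_mat d (\<lambda>u k. x (u, k)) f n W)" for x :: "'a \<times> nat \<Rightarrow> real"
  have "D (\<lambda>(u, k). q u k) \<noteq> 0"
    unfolding D_def using rows_indep_iff_det_gram_mat[OF finW subf inj] indq img by simp
  then have "D (\<lambda>(u, k). p u k) \<noteq> 0"
    using rat_poly_fun_vanishes_if_alg_indep[OF _ rat_poly_fun_det_gram_mat[OF finW subf]] gen
    unfolding generic_def D_def by blast
  then show ?thesis
    unfolding D_def using rows_indep_iff_det_gram_mat[OF finW subf inj] img by simp
qed

lemma rig_rank_le_gen_rank: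
  assumes finW: "finite W" and finF: "finite F" and sub: "\<forall>e\<in>F. e \<subseteq> W"
  shows "rig_rank d q F \<le> gen_rank d W F"
proof -
  obtain F' where F': "F' \<subseteq> F" "rows_indep d q F'" "card F' = rig_rank d q F"
    by (rule rig_rank_witness[OF finF])
  have "rows_indep d (SOME p. generic d W p) F'"
    using rows_indep_at_generic[OF finW generic_SOME[OF finW] finite_subset[OF F'(1) finF] _ F'(2)] F'(1) sub
    by blast
  then show ?thesis unfolding gen_rank_def using card_le_rig_rank[OF finF F'(1)] F'(3) by simp
qed

lemma generic_coord_neq:
  assumes gen: "generic d W p" and finW: "finite W" and ab: "a \<in> W" "b \<in> W" "a \<noteq> b" and k: "k < d"
  shows "p a k \<noteq> p b k"
proof
  assume eq: "p a k = p b k"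
  define P where "P x = x (a, k) - x (b, k)" for x :: "'a \<times> nat \<Rightarrow> real"
  have "rat_poly_fun (W \<times> {..<d}) P"
    unfolding P_def using ab k finW by (intro rat_poly_fun_diff rat_poly_fun_var) auto
  moreover have "P (\<lambda>(u, k). p u k) = 0" unfolding P_def using eq by simp
  ultimately have "P (\<lambda>cl. if cl = (a, k) then 1 else 0) = 0"
    using rat_poly_fun_vanishes_if_alg_indep gen unfolding generic_def by blast
  then show False unfolding P_def using ab by simp
qed

lemma finite_edge_set: "finite W \<Longrightarrow> \<forall>e\<in>F. e \<subseteq> W \<Longrightarrow> finite F"
  by (meson PowI finite_Pow_iff finite_subset subsetI)

lemma gen_rank_le_card: "finite F \<Longrightarrow> gen_rank d W F \<le> card F"
  unfolding gen_rank_def by (rule rig_rank_le_card)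

lemma gen_rank_mono: "finite G \<Longrightarrow> F \<subseteq> G \<Longrightarrow> gen_rank d W F \<le> gen_rank d W G"
  unfolding gen_rank_def by (rule rig_rank_mono)

lemma R_indep_iff_rows_indep: "finite F \<Longrightarrow> R_indep d W F \<longleftrightarrow> rows_indep d (SOME p. generic d W p) F"
  unfolding R_indep_def gen_rank_def by (simp add: rows_indep_iff_rig_rank)

lemma R_indep_subset:
  assumes "finite F" "R_indep d W F" "F' \<subseteq> F"
  shows "R_indep d W F'"
  using rows_indep_subset[OF assms(1) _ assms(3)] assms(2)
  unfolding R_indep_iff_rows_indep[OF assms(1)] R_indep_iff_rows_indep[OF finite_subset[OF assms(3,1)]] .

lemma gen_rank_vertex_set_eq:
  assumes "finite W1" "finite W2" "\<forall>e\<in>F. e \<subseteq> W1" "\<forall>e\<in>F. e \<subseteq> W2"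
  shows "gen_rank d W1 F = gen_rank d W2 F"
proof -
  have finF: "finite F" using finite_edge_set assms(1,3) by blast
  show ?thesis
    using rig_rank_le_gen_rank[OF assms(2) finF assms(4), of d "SOME p. generic d W1 p"]
      rig_rank_le_gen_rank[OF assms(1) finF assms(3), of d "SOME p. generic d W2 p"]
    unfolding gen_rank_def by simp
qed

lemma R_indep_vertex_set_eq:
  assumes "finite W1" "finite W2" "\<forall>e\<in>F. e \<subseteq> W1" "\<forall>e\<in>F. e \<subseteq> W2"
  shows "R_indep d W1 F \<longleftrightarrow> R_indep d W2 F"
  unfolding R_indep_def using gen_rank_vertex_set_eq[OF assms] by simp

lemma circuit_through_edge_if_rank_eq:
  assumes finV: "finite V" and E: "\<forall>e\<in>E. e \<subseteq> V" and f: "f \<in> E"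
    and rank: "gen_rank d V (E - {f}) = gen_rank d V E"
  obtains C where "C \<subseteq> E" "R_circuit d V C" "f \<in> C"
proof -
  define p where "p = (SOME p. generic d V p)"
  have finE: "finite E" using finite_edge_set[OF finV E] .
  have finEf: "finite (E - {f})" using finE by simp
  obtain B where "{} \<subseteq> B" and B: "B \<subseteq> E - {f}" "rows_indep d p B" "card B = rig_rank d p (E - {f})"
    by (rule rows_indep_extend_basis[OF finEf empty_subsetI rows_indep_empty[of d p]])
  have finB: "finite B" using finite_subset[OF B(1)] finE by blast
  have "\<not> rows_indep d p (insert f B)"
  proof
    assume "rows_indep d p (insert f B)"
    then have "card (insert f B) \<le> rig_rank d p E" using B(1) f by (intro card_le_rig_rank[OF finE]) auto
    moreover have "f \<notin> B" using B(1) by blast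
    ultimately show False using B rank finB unfolding gen_rank_def p_def by simp
  qed
  then obtain C where C: "C \<subseteq> insert f B" "\<not> rows_indep d p C"
    and min: "\<And>C'. C' \<subseteq> insert f B \<and> \<not> rows_indep d p C' \<Longrightarrow> card C \<le> card C'"
    using ex_has_least_nat[of "\<lambda>C. C \<subseteq> insert f B \<and> \<not> rows_indep d p C" "insert f B" card] by blast
  have finC: "finite C" using finite_subset[OF C(1)] finB by simp
  have "f \<in> C"
  proof (rule ccontr)
    assume "f \<notin> C"
    then have "C \<subseteq> B" using C(1) by blast
    then show False using C(2) rows_indep_subset[OF finB B(2)] by blast
  qed
  moreover have "R_circuit d V C"
    unfolding R_circuit_def
  proof (intro conjI allI impI)
    show "\<not> R_indep d V C" using C(2) R_indep_iff_rows_indep[OF finC] unfolding p_def by simp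
  next
    fix C' assume C': "C' \<subset> C"
    then have "card C' < card C" by (rule psubset_card_mono[OF finC])
    then have "rows_indep d p C'" using min[of C'] C(1) C' by force
    then show "R_indep d V C'"
      using R_indep_iff_rows_indep[OF finite_subset[OF psubset_imp_subset[OF C'] finC]] unfolding p_def by simp
  qed
  moreover have "C \<subseteq> E" using C(1) B(1) f by blast
  ultimately show ?thesis using that by blast
qed

section \<open>Coning\<close>

definition cone_edges :: "'a \<Rightarrow> 'a set \<Rightarrow> 'a set set" where
  "cone_edges v W = {{v, u} | u. u \<in> W}"

lemma finite_cone_edges: "finite W \<Longrightarrow> finite (cone_edges v W)"
  unfolding cone_edges_def by simp

lemma card_cone_edges: "v \<notin> W \<Longrightarrow> finite W \<Longrightarrow> card (cone_edges v W) = card W"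
proof -
  assume v: "v \<notin> W" and fin: "finite W"
  have "cone_edges v W = (\<lambda>u. {v, u}) ` W" unfolding cone_edges_def by auto
  moreover have "inj_on (\<lambda>u. {v, u}) W"
  proof (rule inj_onI)
    fix a b assume "a \<in> W" "b \<in> W" "{v, a} = {v, b}"
    then show "a = b" using v by (metis doubleton_eq_iff)
  qed
  ultimately show ?thesis by (simp add: card_image)
qed

lemma cone_edgesD:
  assumes "e \<in> cone_edges v W" "v \<notin> W"
  obtains u where "u \<in> W" "e = {v, u}" "u \<noteq> v" "e \<subseteq> insert v W" "card e = 2"
proof -
  obtain u where "u \<in> W" "e = {v, u}" using assms(1) unfolding cone_edges_def by blast
  moreover have "u \<noteq> v" using \<open>u \<in> W\<close> assms(2) by blast
  ultimately show ?thesis using that by simp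
qed

lemma cone_edge_containing:
  assumes "e \<in> cone_edges v W" "v \<notin> W" "u \<in> W" "u \<in> e"
  shows "e = {v, u}"
  using assms unfolding cone_edges_def by auto

lemma sum_cone_edges_at:
  assumes "finite W" "v \<notin> W" "u \<in> W"
  shows "(\<Sum>e\<in>cone_edges v W. C e * rig_entry p e u k) = C {v, u} * (p u k - p v k)"
proof -
  have mem: "{v, u} \<in> cone_edges v W" using assms(3) unfolding cone_edges_def by blast
  have "(\<Sum>e\<in>cone_edges v W - {{v, u}}. C e * rig_entry p e u k) = 0"
  proof (rule sum.neutral, rule ballI)
    fix e assume "e \<in> cone_edges v W - {{v, u}}"
    then have "u \<notin> e" using cone_edge_containing[OF _ assms(2,3), of e] by blast
    then show "C e * rig_entry p e u k = 0" by (simp add: rig_entry_outside)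
  qed
  then have "(\<Sum>e\<in>cone_edges v W. C e * rig_entry p e u k) = C {v, u} * rig_entry p {v, u} u k"
    using sum.remove[OF finite_cone_edges[OF assms(1)] mem, of "\<lambda>e. C e * rig_entry p e u k"] by simp
  also have "\<dots> = C {v, u} * (p u k - p v k)"
    using assms rig_entry_pair[of u v p k] by (auto simp: insert_commute)
  finally show ?thesis .
qed

lemma rows_indep_cone_edges:
  assumes finW: "finite W" and v: "v \<notin> W" and apex: "\<And>u. u \<in> W \<Longrightarrow> p u d \<noteq> p v d"
  shows "rows_indep (Suc d) p (cone_edges v W)"
  unfolding rows_indep_def
proof (intro allI impI ballI)
  fix c e assume H: "\<forall>w k. k < Suc d \<longrightarrow> (\<Sum>e\<in>cone_edges v W. c e * rig_entry p e w k) = 0"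
    and e: "e \<in> cone_edges v W"
  then obtain u where u: "u \<in> W" "e = {v, u}" unfolding cone_edges_def by blast
  have "c {v, u} * (p u d - p v d) = 0"
    using spec[OF spec[OF H, of u], of d] sum_cone_edges_at[OF finW v u(1), of c p d] by simp
  then show "c e = 0" using apex[OF u(1)] u(2) by simp
qed

lemma rig_combination_apex_column:
  assumes finW: "finite W" and v: "v \<notin> W" and finF: "finite F"
    and edges: "\<forall>e\<in>F. e \<subseteq> insert v W \<and> card e = 2"
    and cols: "\<forall>w\<in>W. (\<Sum>e\<in>F. C e * rig_entry p e w k) = 0"
  shows "(\<Sum>e\<in>F. C e * rig_entry p e v k) = 0"
proof -
  have "(\<Sum>w\<in>insert v W. \<Sum>e\<in>F. C e * rig_entry p e w k)
      = (\<Sum>e\<in>F. C e * (\<Sum>w\<in>insert v W. rig_entry p e w k))"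
    unfolding sum_distrib_left by (rule sum.swap)
  also have "\<dots> = 0"
  proof (intro sum.neutral ballI)
    fix e assume "e \<in> F"
    then show "C e * (\<Sum>w\<in>insert v W. rig_entry p e w k) = 0"
      using edges finW sum_rig_entry_eq_0[of e "insert v W" p k] by simp
  qed
  finally show ?thesis using finW v cols by simp
qed

lemma rig_entry_rescaled:
  assumes "e = {u, z}" "u \<noteq> z" "lam u \<noteq> 0" "lam z \<noteq> 0"
    and "x u k = lam u * y u k" "x z k = lam z * y z k"
  shows "c / (\<Prod>w\<in>e. lam w) * rig_entry x e u k
    = c * rig_entry y e u k / lam u + y u k * (c / (\<Prod>w\<in>e. lam w) * rig_entry (\<lambda>w _. lam w) e u 0)"
proof -
  have eqs: "rig_entry x e u k = lam u * y u k - lam z * y z k" "rig_entry y e u k = y u k - y z k"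
    "rig_entry (\<lambda>w _. lam w) e u 0 = lam u - lam z" "(\<Prod>w\<in>e. lam w) = lam u * lam z"
    using assms rig_entry_pair[of u z] by auto
  show ?thesis unfolding eqs using assms(3,4) by (simp add: field_simps)
qed

lemma cone_lift_column:
  assumes finW: "finite W" and v: "v \<notin> W" and B: "\<forall>e\<in>B. e \<subseteq> W \<and> card e = 2" and u: "u \<in> W"
    and lam: "\<forall>w\<in>W. lam w \<noteq> 0" and xy: "\<forall>w\<in>W. x w k = lam w * y w k" and origin: "x v k = 0"
    and y_col: "(\<Sum>e\<in>B. c e * rig_entry y e u k) = 0"
    and C_B: "\<forall>e\<in>B. C e = c e / (\<Prod>w\<in>e. lam w)"
    and C_cone: "C {v, u} = - (\<Sum>e\<in>B. C e * rig_entry (\<lambda>w _. lam w) e u 0) / lam u"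
  shows "(\<Sum>e\<in>B \<union> cone_edges v W. C e * rig_entry x e u k) = 0"
proof -
  have per_edge: "C e * rig_entry x e u k
      = c e * rig_entry y e u k / lam u + y u k * (C e * rig_entry (\<lambda>w _. lam w) e u 0)"
    if e: "e \<in> B" for e
  proof (cases "u \<in> e")
    case True
    have "card e = 2" using B e by blast
    then obtain z where z: "e = {u, z}" "z \<noteq> u" using card_2_ex_other[OF _ True] by blast
    then have "z \<in> W" using B e by auto
    then have "lam u \<noteq> 0" "lam z \<noteq> 0" "x u k = lam u * y u k" "x z k = lam z * y z k"
      using lam xy u by auto
    moreover have "C e = c e / (\<Prod>w\<in>e. lam w)" using C_B e by blast
    ultimately show ?thesis using rig_entry_rescaled[OF z(1) not_sym[OF z(2)], of lam x k y "c e"] by simp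
  qed (simp add: rig_entry_outside)
  have "(\<Sum>e\<in>B. C e * rig_entry x e u k)
      = (\<Sum>e\<in>B. c e * rig_entry y e u k / lam u + y u k * (C e * rig_entry (\<lambda>w _. lam w) e u 0))"
    by (rule sum.cong[OF refl per_edge])
  also have "\<dots> = y u k * (\<Sum>e\<in>B. C e * rig_entry (\<lambda>w _. lam w) e u 0)"
    using y_col unfolding sum.distrib sum_divide_distrib[symmetric] sum_distrib_left[symmetric] by simp
  also have "\<dots> = - (C {v, u} * (x u k - x v k))"
  proof -
    have "lam u \<noteq> 0" "x u k = lam u * y u k" using lam xy u by auto
    then show ?thesis unfolding C_cone origin by simp
  qed
  finally have sum_B: "(\<Sum>e\<in>B. C e * rig_entry x e u k) = - (C {v, u} * (x u k - x v k))" .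
  have finB: "finite B" using finite_edge_set[OF finW] B by blast
  have disj: "B \<inter> cone_edges v W = {}" using B v unfolding cone_edges_def by auto
  have "(\<Sum>e\<in>B \<union> cone_edges v W. C e * rig_entry x e u k)
      = (\<Sum>e\<in>B. C e * rig_entry x e u k) + (\<Sum>e\<in>cone_edges v W. C e * rig_entry x e u k)"
    by (rule sum.union_disjoint[OF finB finite_cone_edges[OF finW] disj])
  also have "\<dots> = 0" unfolding sum_B sum_cone_edges_at[OF finW v u] by simp
  finally show ?thesis .
qed

lemma cone_lift_dependence:
  assumes finW: "finite W" and v: "v \<notin> W" and B: "\<forall>e\<in>B. e \<subseteq> W \<and> card e = 2"
    and origin: "\<forall>k. x v k = 0" and last_nz: "\<forall>u\<in>W. x u d \<noteq> 0"
    and dep: "\<forall>w k. k < d \<longrightarrow> (\<Sum>e\<in>B. c e * rig_entry (\<lambda>u k. x u k / x u d) e w k) = 0"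
  obtains C where "\<forall>w k. k < Suc d \<longrightarrow> (\<Sum>e\<in>B \<union> cone_edges v W. C e * rig_entry x e w k) = 0"
    and "\<forall>e\<in>B. C e = c e / (\<Prod>w\<in>e. x w d)"
proof -
  define lam where "lam u = x u d" for u
  define y where "y u k = x u k / lam u" for u k
  define D where "D u = (\<Sum>e\<in>B. c e / (\<Prod>w\<in>e. lam w) * rig_entry (\<lambda>w _. lam w) e u 0)" for u
  define C where "C e = (if e \<in> B then c e / (\<Prod>w\<in>e. lam w)
      else - D (THE u. e = {v, u}) / lam (THE u. e = {v, u}))" for e
  have lam: "\<forall>w\<in>W. lam w \<noteq> 0" using last_nz unfolding lam_def by blast
  have xy: "\<forall>w\<in>W. x w k = lam w * y w k" for k using lam unfolding y_def by simp
  have C_B: "\<forall>e\<in>B. C e = c e / (\<Prod>w\<in>e. lam w)" unfolding C_def by simp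
  have C_cone: "C {v, u} = - (\<Sum>e\<in>B. C e * rig_entry (\<lambda>w _. lam w) e u 0) / lam u" if "u \<in> W" for u
  proof -
    have "(THE u'. {v, u} = {v, u'}) = u" by (rule the_equality) (auto simp: doubleton_eq_iff)
    moreover have "{v, u} \<notin> B" using B v that by auto
    ultimately show ?thesis unfolding C_def D_def by simp
  qed
  have y_col: "(\<Sum>e\<in>B. c e * rig_entry y e u k) = 0" if "u \<in> W" "k < Suc d" for u k
  proof (cases "k < d")
    case True
    then show ?thesis using dep unfolding y_def lam_def by simp
  next
    case False
    have y_last: "y w d = 1" if "w \<in> W" for w using lam that unfolding y_def by (simp add: lam_def)
    have "rig_entry y e u d = 0" if "e \<in> B" for e
    proof -
      have "e \<subseteq> W" using B that by blast
      then show ?thesis unfolding rig_entry_def using \<open>u \<in> W\<close> y_last by (auto intro!: sum.neutral)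
    qed
    moreover have "k = d" using False that(2) by simp
    ultimately show ?thesis by simp
  qed
  have cols: "\<forall>w\<in>W. (\<Sum>e\<in>B \<union> cone_edges v W. C e * rig_entry x e w k) = 0" if "k < Suc d" for k
  proof
    fix u assume u: "u \<in> W"
    show "(\<Sum>e\<in>B \<union> cone_edges v W. C e * rig_entry x e u k) = 0"
      by (rule cone_lift_column[where x = x and y = y and lam = lam and C = C,
            OF finW v B u lam xy[of k] origin[rule_format, of k] y_col[OF u that] C_B C_cone[OF u]])
  qed
  have edges: "\<forall>e\<in>B \<union> cone_edges v W. e \<subseteq> insert v W \<and> card e = 2"
    using B cone_edgesD[OF _ v] by (metis UnE subset_insertI2)
  have fin: "finite (B \<union> cone_edges v W)"
    using finite_edge_set[OF finW] B finite_cone_edges[OF finW] by blast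
  have "(\<Sum>e\<in>B \<union> cone_edges v W. C e * rig_entry x e w k) = 0" if "k < Suc d" for w k
  proof -
    consider "w = v" | "w \<in> W" | "w \<notin> insert v W" by blast
    then show ?thesis
    proof cases
      case 1
      then show ?thesis using rig_combination_apex_column[OF finW v fin edges cols[OF that]] by simp
    next
      case 3
      then have "rig_entry x e w k = 0" if "e \<in> B \<union> cone_edges v W" for e
        using edges that by (blast intro: rig_entry_outside)
      then show ?thesis by simp
    qed (use cols that in blast)
  qed
  then show ?thesis using that C_B unfolding lam_def by blast
qed

text \<open>Central projection from the apex onto the hyperplane where the last coordinate is 1 turns a
  dependence of B into one of B together with the cone edges.\<close>
lemma rows_indep_cone_projection:
  assumes finW: "finite W" and v: "v \<notin> W" and B: "\<forall>e\<in>B. e \<subseteq> W \<and> card e = 2"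
    and apex: "\<forall>u\<in>W. p u d \<noteq> p v d"
    and ind: "rows_indep (Suc d) p (B \<union> cone_edges v W)"
  shows "rows_indep d (\<lambda>u k. (p u k - p v k) / (p u d - p v d)) B"
  unfolding rows_indep_def
proof (intro allI impI ballI)
  fix c e0
  assume dep: "\<forall>w k. k < d \<longrightarrow> (\<Sum>e\<in>B. c e * rig_entry (\<lambda>u k. (p u k - p v k) / (p u d - p v d)) e w k) = 0"
    and e0: "e0 \<in> B"
  define x where "x u k = p u k - p v k" for u k
  have "\<forall>u\<in>W. x u d \<noteq> 0" using apex unfolding x_def by simp
  then obtain C where C: "\<forall>w k. k < Suc d \<longrightarrow> (\<Sum>e\<in>B \<union> cone_edges v W. C e * rig_entry x e w k) = 0"
    and C_B: "\<forall>e\<in>B. C e = c e / (\<Prod>w\<in>e. x w d)"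
    using cone_lift_dependence[OF finW v B _ _ dep[folded x_def]] unfolding x_def by auto
  have "C e0 = 0"
    using ind C e0 rig_entry_translate[of p "p v"] unfolding rows_indep_def x_def by simp
  moreover have "(\<Prod>w\<in>e0. x w d) \<noteq> 0"
  proof -
    have "e0 \<subseteq> W" using B e0 by blast
    then show ?thesis using apex finite_subset[OF _ finW] unfolding x_def by auto
  qed
  ultimately show "c e0 = 0" using C_B e0 by simp
qed

lemma gen_rank_cone_le:
  assumes finW: "finite W" and v: "v \<notin> W" and H: "\<forall>e\<in>H. e \<subseteq> W \<and> card e = 2"
  shows "gen_rank (Suc d) (insert v W) (H \<union> cone_edges v W) \<le> gen_rank d W H + card W"
proof -
  define p where "p = (SOME p. generic (Suc d) (insert v W) p)"
  have finU: "finite (insert v W)" using finW by simp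
  have apex: "p u d \<noteq> p v d" if "u \<in> W" for u
    using generic_coord_neq[OF generic_SOME[OF finU] finU, of u v d] that v unfolding p_def by auto
  have finH: "finite H" using finite_edge_set[OF finW] H by blast
  have finHC: "finite (H \<union> cone_edges v W)" using finH finite_cone_edges[OF finW] by simp
  have "rows_indep (Suc d) p (cone_edges v W)" using rows_indep_cone_edges[OF finW v] apex by blast
  then obtain A where A: "cone_edges v W \<subseteq> A" "A \<subseteq> H \<union> cone_edges v W" "rows_indep (Suc d) p A"
      "card A = rig_rank (Suc d) p (H \<union> cone_edges v W)"
    by (rule rows_indep_extend_basis[OF finHC Un_upper2])
  define B where "B = A \<inter> H"
  have AB: "A = B \<union> cone_edges v W" unfolding B_def using A(1,2) by blast
  have BH: "B \<subseteq> H" unfolding B_def by blast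
  have finB: "finite B" using finite_subset[OF BH finH] .
  have "\<forall>e\<in>B. e \<subseteq> W \<and> card e = 2" using H BH by blast
  moreover have "rows_indep (Suc d) p (B \<union> cone_edges v W)" using A(3) AB by simp
  ultimately have "rows_indep d (\<lambda>u k. (p u k - p v k) / (p u d - p v d)) B"
    using rows_indep_cone_projection[where p = p and d = d, OF finW v] apex by blast
  then have "card B \<le> rig_rank d (\<lambda>u k. (p u k - p v k) / (p u d - p v d)) H"
    by (rule card_le_rig_rank[OF finH BH])
  also have "\<dots> \<le> gen_rank d W H"
    by (rule rig_rank_le_gen_rank[OF finW finH]) (use H in blast)
  finally have "card B \<le> gen_rank d W H" .
  moreover have "card A = card B + card W"
  proof -
    have "B \<inter> cone_edges v W = {}" using BH H v unfolding cone_edges_def by blast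
    then show ?thesis
      unfolding AB using card_Un_disjoint[OF finB finite_cone_edges[OF finW]] card_cone_edges[OF v finW]
      by simp
  qed
  moreover have "gen_rank (Suc d) (insert v W) (H \<union> cone_edges v W) = card A"
    unfolding gen_rank_def p_def[symmetric] using A(4) by simp
  ultimately show ?thesis by simp
qed

lemma R_indep_if_cone_R_indep:
  assumes finW: "finite W" and v: "v \<notin> W" and H: "\<forall>e\<in>H. e \<subseteq> W \<and> card e = 2"
    and ind: "R_indep (Suc d) (insert v W) (H \<union> cone_edges v W)"
  shows "R_indep d W H"
proof -
  have finH: "finite H" using finite_edge_set[OF finW] H by blast
  have "H \<inter> cone_edges v W = {}" using H v unfolding cone_edges_def by auto
  then have "card H + card W = gen_rank (Suc d) (insert v W) (H \<union> cone_edges v W)"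
    using ind card_Un_disjoint[OF finH finite_cone_edges[OF finW]] card_cone_edges[OF v finW]
    unfolding R_indep_def by simp
  then have "card H \<le> gen_rank d W H" using gen_rank_cone_le[OF finW v H, where d = d] by simp
  then show ?thesis using gen_rank_le_card[OF finH, where d = d and W = W] unfolding R_indep_def by simp
qed

lemma complete_edges_iff: "e \<in> complete_edges W \<longleftrightarrow> e \<subseteq> W \<and> card e = 2"
  unfolding complete_edges_def by (auto simp: card_2_iff)

lemma complete_edges_insert:
  "v \<notin> W \<Longrightarrow> complete_edges (insert v W) = complete_edges W \<union> cone_edges v W"
  unfolding complete_edges_def cone_edges_def by (auto simp: insert_commute)

lemma card_complete_edges:
  assumes "finite W"
  shows "card (complete_edges W) = card W choose 2"
proof -
  have "complete_edges W = {A. A \<subseteq> W \<and> card A = 2}" by (simp add: set_eq_iff complete_edges_iff)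
  then show ?thesis using n_subsets[OF assms, of 2] by (simp only:)
qed

lemma rig_rank_0:
  assumes "finite F"
  shows "rig_rank 0 p F = 0"
proof -
  obtain F' where F': "F' \<subseteq> F" "rows_indep 0 p F'" "card F' = rig_rank 0 p F"
    by (rule rig_rank_witness[OF assms])
  have "F' = {}" using spec[OF F'(2)[unfolded rows_indep_def], of "\<lambda>_. 1"] by auto
  then show ?thesis using F'(3) by simp
qed

lemma gen_rank_complete_edges_le:
  "finite W \<Longrightarrow> d \<le> card W
    \<Longrightarrow> int (gen_rank d W (complete_edges W)) \<le> int d * int (card W) - int ((d + 1) choose 2)"
proof (induction d arbitrary: W)
  case 0
  have "finite (complete_edges W)" by (rule finite_edge_set[OF 0(1)]) (simp add: complete_edges_iff)
  then show ?case unfolding gen_rank_def using rig_rank_0 by (simp add: binomial_eq_0)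
next
  case (Suc d)
  have "W \<noteq> {}" using Suc.prems by auto
  then obtain v where v: "v \<in> W" by blast
  define W' where "W' = W - {v}"
  have finW': "finite W'" and vW': "v \<notin> W'" and W: "W = insert v W'"
    unfolding W'_def using Suc.prems(1) v by auto
  have cW: "int (card W) = int (card W') + 1" using W finW' vW' by simp
  have edges: "\<forall>e\<in>complete_edges W'. e \<subseteq> W' \<and> card e = 2" by (simp add: complete_edges_iff)
  have "gen_rank (Suc d) W (complete_edges W)
      = gen_rank (Suc d) (insert v W') (complete_edges W' \<union> cone_edges v W')"
    unfolding W complete_edges_insert[OF vW'] ..
  also have "\<dots> \<le> gen_rank d W' (complete_edges W') + card W'"
    by (rule gen_rank_cone_le[OF finW' vW' edges])
  finally have "int (gen_rank (Suc d) W (complete_edges W))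
      \<le> int (gen_rank d W' (complete_edges W')) + int (card W')" by simp
  also have "\<dots> \<le> int d * int (card W') - int ((d + 1) choose 2) + int (card W')"
    using Suc.IH[OF finW'] Suc.prems(2) W finW' vW' by simp
  also have "\<dots> = int (Suc d) * int (card W) - int ((Suc d + 1) choose 2)"
  proof -
    have "(Suc d + 1) choose 2 = (d + 1 choose 1) + (d + 1 choose 2)" by (simp add: numeral_2_eq_2)
    then show ?thesis unfolding cW by (simp add: algebra_simps)
  qed
  finally show ?case .
qed

lemma gen_rank_le_rigidity_bound:
  assumes "finite W" "d \<le> card W" "\<forall>e\<in>F. e \<subseteq> W \<and> card e = 2"
  shows "int (gen_rank d W F) \<le> int d * int (card W) - int ((d + 1) choose 2)"
proof -
  have "finite (complete_edges W)" by (rule finite_edge_set[OF assms(1)]) (simp add: complete_edges_iff)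
  moreover have "F \<subseteq> complete_edges W" using assms(3) by (auto simp: complete_edges_iff)
  ultimately have "gen_rank d W F \<le> gen_rank d W (complete_edges W)" by (rule gen_rank_mono)
  then show ?thesis using gen_rank_complete_edges_le[OF assms(1,2)] by simp
qed

lemma two_mult_choose_two: "2 * int (m choose 2) = int m * (int m - 1)"
proof (induction m)
  case (Suc m)
  have "Suc m choose 2 = m + (m choose 2)" by (simp add: numeral_2_eq_2)
  then show ?case using Suc.IH by (simp add: algebra_simps)
qed simp

text \<open>The complete graphs on d and d + 1 vertices, exceptional in the definition of rigidity,
  satisfy the rank formula too.\<close>
lemma gen_rank_if_min_rigid:
  assumes "finite W" "d \<le> card W" "R_min_rigid d W F"
  shows "int (gen_rank d W F) = int d * int (card W) - int ((d + 1) choose 2)"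
proof -
  have ind: "gen_rank d W F = card F" using assms(3) unfolding R_min_rigid_def R_indep_def by simp
  consider (complete) "F = complete_edges W" "card W \<le> d + 1"
    | (formula) "int (gen_rank d W F) = int d * int (card W) - int ((d + 1) choose 2)"
    using assms(3) unfolding R_min_rigid_def R_rigid_def by blast
  then show ?thesis
  proof cases
    case complete
    then have "card W = d \<or> card W = d + 1" using assms(2) by auto
    moreover have "gen_rank d W F = card W choose 2"
      using ind complete card_complete_edges[OF assms(1)] by simp
    ultimately show ?thesis
      using two_mult_choose_two[of d] two_mult_choose_two[of "d + 1"] by (auto simp: algebra_simps)
  qed
qed

lemma card_cone_graph_diff:
  assumes finV: "finite V" and v: "v \<notin> V" and E: "\<forall>e\<in>E. e \<subseteq> V" and T: "T \<subseteq> cone_edges v V"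
  shows "int (card ((E \<union> cone_edges v V) - T)) = int (card E) + int (card V) - int (card T)"
proof -
  have finE: "finite E" using finite_edge_set[OF finV E] .
  have finC: "finite (cone_edges v V)" using finite_cone_edges[OF finV] .
  have "E \<inter> cone_edges v V = {}" using E v unfolding cone_edges_def by auto
  then have "card (E \<union> cone_edges v V) = card E + card V"
    using card_Un_disjoint[OF finE finC] card_cone_edges[OF v finV] by simp
  moreover have "card T \<le> card V" using card_mono[OF finC T] card_cone_edges[OF v finV] by simp
  moreover have "card ((E \<union> cone_edges v V) - T) = card (E \<union> cone_edges v V) - card T"
    using T finite_subset[OF T finC] by (intro card_Diff_subset) auto
  ultimately show ?thesis by simp
qed

lemma cone_rank_tight:
  assumes finV: "finite V" and v: "v \<notin> V" and E: "\<forall>e\<in>E. e \<subseteq> V \<and> card e = 2"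
    and dV: "d \<le> card V" and F: "F \<subseteq> E \<union> cone_edges v V"
    and rigid: "R_min_rigid (Suc d) (insert v V) F"
  shows "int (gen_rank d V E) = int d * int (card V) - int ((d + 1) choose 2)"
    and "card F = gen_rank (Suc d) (insert v V) (E \<union> cone_edges v V)"
    and "card F = gen_rank d V E + card V"
proof -
  have finEC: "finite (E \<union> cone_edges v V)"
    using finite_edge_set[OF finV] E finite_cone_edges[OF finV] by blast
  have cU: "card (insert v V) = Suc (card V)" using finV v by simp
  have "int ((Suc d + 1) choose 2) = int ((d + 1) choose 2) + int d + 1"
    by (simp add: numeral_2_eq_2)
  then have "int (card F) = int d * int (card V) - int ((d + 1) choose 2) + int (card V)"
    using gen_rank_if_min_rigid[OF _ _ rigid] rigid cU dV finV
    unfolding R_min_rigid_def R_indep_def by (simp add: algebra_simps)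
  moreover have "card F \<le> gen_rank (Suc d) (insert v V) (E \<union> cone_edges v V)"
    using gen_rank_mono[OF finEC F, where d = "Suc d" and W = "insert v V"] rigid
    unfolding R_min_rigid_def R_indep_def by simp
  moreover have "gen_rank (Suc d) (insert v V) (E \<union> cone_edges v V) \<le> gen_rank d V E + card V"
    by (rule gen_rank_cone_le[OF finV v E])
  moreover have "int (gen_rank d V E) \<le> int d * int (card V) - int ((d + 1) choose 2)"
    by (rule gen_rank_le_rigidity_bound[OF finV dV E])
  ultimately show "int (gen_rank d V E) = int d * int (card V) - int ((d + 1) choose 2)"
    and "card F = gen_rank (Suc d) (insert v V) (E \<union> cone_edges v V)"
    and "card F = gen_rank d V E + card V"
    by linarith+
qed

lemma R_indep_if_in_cone_subgraph:
  assumes finV: "finite V" and v: "v \<notin> V" and E: "\<forall>e\<in>E. e \<subseteq> V \<and> card e = 2"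
    and F: "F \<subseteq> E \<union> cone_edges v V" and indF: "R_indep (Suc d) (insert v V) F"
    and EF: "{e \<in> E. e \<inter> S = {}} \<subseteq> F" and cone: "cone_edges v (V - S) \<subseteq> F"
  shows "R_indep d (V - S) {e \<in> E. e \<inter> S = {}}"
proof (rule R_indep_if_cone_R_indep)
  let ?H = "{e \<in> E. e \<inter> S = {}} \<union> cone_edges v (V - S)"
  have "finite (E \<union> cone_edges v V)" using finite_edge_set[OF finV] E finite_cone_edges[OF finV] by blast
  then have finF: "finite F" using F by (rule finite_subset[rotated])
  have edges: "\<forall>e\<in>?H. e \<subseteq> insert v (V - S)" using E unfolding cone_edges_def by blast
  have "R_indep (Suc d) (insert v V) ?H" using R_indep_subset[OF finF indF] EF cone by blast
  then show "R_indep (Suc d) (insert v (V - S)) ?H"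
    using R_indep_vertex_set_eq[of "insert v V" "insert v (V - S)" ?H] edges finV by blast
qed (use finV v E in auto)

lemma R_indep_exchange_at_non_neighbour:
  assumes finV: "finite V" and v: "v \<notin> V"
    and finEC: "finite (E \<union> cone_edges v V)" and F: "F \<subseteq> E \<union> cone_edges v V"
    and indF: "R_indep (Suc d) (insert v V) F"
    and basis: "card F = gen_rank (Suc d) (insert v V) (E \<union> cone_edges v V)"
    and s: "s \<in> V" "{v, s} \<notin> F"
  obtains f where "f \<in> F" "f \<in> E" "s \<in> f" "R_indep (Suc d) (insert v V) (insert {v, s} (F - {f}))"
proof -
  define p where "p = (SOME p. generic (Suc d) (insert v V) p)"
  have finU: "finite (insert v V)" using finV by simp
  have finF: "finite F" using finite_subset[OF F finEC] .
  have rowsF: "rows_indep (Suc d) p F" using indF R_indep_iff_rows_indep[OF finF] unfolding p_def by simp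
  have vs: "{v, s} \<in> cone_edges v V" using s unfolding cone_edges_def by blast
  have "\<not> rows_indep (Suc d) p (insert {v, s} F)"
  proof
    assume "rows_indep (Suc d) p (insert {v, s} F)"
    then have "card (insert {v, s} F) \<le> gen_rank (Suc d) (insert v V) (E \<union> cone_edges v V)"
      unfolding gen_rank_def p_def[symmetric] using F vs by (intro card_le_rig_rank[OF finEC]) auto
    then show False using basis s(2) finF by simp
  qed
  moreover have "rig_entry p {v, s} s 0 \<noteq> 0"
  proof -
    have gen: "generic (Suc d) (insert v V) p" unfolding p_def by (rule generic_SOME[OF finU])
    have "s \<noteq> v" using s(1) v by blast
    then have "p s 0 \<noteq> p v 0" using generic_coord_neq[OF gen finU, of s v 0] s(1) by simp
    then show ?thesis using rig_entry_pair[OF \<open>s \<noteq> v\<close>, of p 0] by (simp add: insert_commute)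
  qed
  ultimately obtain f where f: "f \<in> F" "s \<in> f" and X: "rows_indep (Suc d) p (insert {v, s} (F - {f}))"
    using rows_indep_exchange_at_vertex[OF finF rowsF] by blast
  have "f \<in> E" using f F cone_edge_containing[of f v V s] s v by auto
  moreover have "R_indep (Suc d) (insert v V) (insert {v, s} (F - {f}))"
    using X R_indep_iff_rows_indep[of "insert {v, s} (F - {f})" "Suc d" "insert v V"] finF
    unfolding p_def by simp
  ultimately show ?thesis using that f by blast
qed

lemma R_circuit_at_non_neighbour:
  assumes finV: "finite V" and v: "v \<notin> V" and E: "\<forall>e\<in>E. e \<subseteq> V \<and> card e = 2"
    and F: "F \<subseteq> E \<union> cone_edges v V" and indF: "R_indep (Suc d) (insert v V) F"
    and basis: "card F = gen_rank (Suc d) (insert v V) (E \<union> cone_edges v V)"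
    and tight: "card F = gen_rank d V E + card V"
    and s: "s \<in> V" "{v, s} \<notin> F"
  shows "\<exists>C \<subseteq> E. R_circuit d V C \<and> s \<in> \<Union>C"
proof -
  have finE: "finite E" using finite_edge_set[OF finV] E by blast
  have finEC: "finite (E \<union> cone_edges v V)" using finE finite_cone_edges[OF finV] by simp
  obtain f where f: "f \<in> F" "f \<in> E" "s \<in> f"
    and X: "R_indep (Suc d) (insert v V) (insert {v, s} (F - {f}))"
    by (rule R_indep_exchange_at_non_neighbour[OF finV v finEC F indF basis s])
  have finF: "finite F" using finite_subset[OF F finEC] .
  have sub: "insert {v, s} (F - {f}) \<subseteq> (E - {f}) \<union> cone_edges v V"
    using F s(1) unfolding cone_edges_def by blast
  have "card F = card (insert {v, s} (F - {f}))"
    using finF s(2) card_Suc_Diff1[OF finF f(1)] by simp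
  also have "\<dots> \<le> gen_rank (Suc d) (insert v V) ((E - {f}) \<union> cone_edges v V)"
    using X gen_rank_mono[OF _ sub, where d = "Suc d" and W = "insert v V"] finE finite_cone_edges[OF finV]
    unfolding R_indep_def by simp
  also have "\<dots> \<le> gen_rank d V (E - {f}) + card V"
    using E by (intro gen_rank_cone_le[OF finV v]) auto
  finally have "gen_rank d V E \<le> gen_rank d V (E - {f})" using tight by simp
  moreover have "gen_rank d V (E - {f}) \<le> gen_rank d V E" using finE by (intro gen_rank_mono) auto
  ultimately have "gen_rank d V (E - {f}) = gen_rank d V E" by simp
  then obtain C where "C \<subseteq> E" "R_circuit d V C" "f \<in> C"
    using circuit_through_edge_if_rank_eq[OF finV _ f(2)] E by blast
  then show ?thesis using f(3) by blast
qed

theorem lemma4p9: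
  fixes d t :: nat and V :: "'a set" and E T :: "'a set set" and v :: 'a
  assumes "d \<ge> 1"
    and "simple_graph V E"
    and "card V \<ge> d"
    and "v \<notin> V"
    and "T \<subseteq> {{v, u} | u. u \<in> V}"
    and "card T = t"
    and "R_min_rigid (d + 1) (insert v V) ((E \<union> {{v, u} | u. u \<in> V}) - T)"
  shows "R_rigid d V E
    \<and> int (card E) = int d * int (card V) - int ((d + 1) choose 2) + int t
    \<and> (let S = {u \<in> V. {v, u} \<notin> (E \<union> {{v, w} | w. w \<in> V}) - T}
       in R_indep d (V - S) {e \<in> E. e \<inter> S = {}}
          \<and> (\<forall>s\<in>S. \<exists>C \<subseteq> E. R_circuit d V C \<and> s \<in> \<Union>C))"
proof -
  have finV: "finite V" and E: "\<forall>e\<in>E. e \<subseteq> V \<and> card e = 2"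
    using assms(2) unfolding simple_graph_def by auto
  define F where "F = (E \<union> cone_edges v V) - T"
  define S where "S = {u \<in> V. {v, u} \<notin> F}"
  have T: "T \<subseteq> cone_edges v V" using assms(5) unfolding cone_edges_def .
  have "E \<inter> cone_edges v V = {}" using E assms(4) unfolding cone_edges_def by blast
  then have FEC: "F \<subseteq> E \<union> cone_edges v V" and EF: "E \<subseteq> F" using T unfolding F_def by auto
  have rigid: "R_min_rigid (Suc d) (insert v V) F" using assms(7) unfolding F_def cone_edges_def by simp
  then have indF: "R_indep (Suc d) (insert v V) F" unfolding R_min_rigid_def by simp
  note tight = cone_rank_tight[OF finV assms(4) E assms(3) FEC rigid]
  have "int (card E) = int d * int (card V) - int ((d + 1) choose 2) + int t"
    using card_cone_graph_diff[OF finV assms(4) _ T] tight(1,3) E assms(6) unfolding F_def by force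
  moreover have "R_indep d (V - S) {e \<in> E. e \<inter> S = {}}"
    using EF by (intro R_indep_if_in_cone_subgraph[OF finV assms(4) E FEC indF])
      (auto simp: S_def cone_edges_def)
  moreover have "\<forall>s\<in>S. \<exists>C \<subseteq> E. R_circuit d V C \<and> s \<in> \<Union>C"
    using R_circuit_at_non_neighbour[OF finV assms(4) E FEC indF tight(2,3)] unfolding S_def by blast
  ultimately show ?thesis
    using tight(1) unfolding R_rigid_def Let_def S_def F_def cone_edges_def by simp
qed

end
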